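(* Let $G$ be a finite group with $Z(G)=1$, $H\subseteq G$ an abelian subgroup, $\omega$ a non-degenerate 2-cocycle on $\widehat H$, and $A=(kG)^J$ with $J=\sum_{\alpha,\beta\in\widehat H}\omega(\alpha,\beta)e_\alpha\otimes e_\beta$. Then $|H|$ divides $[A^*:G(A^* )\cap Z(A^* )]=\dim A/|G(A^* )\cap Z(A^* )|$.
   Context: $k$ is an algebraically closed field of characteristic zero. For a twist $J$ in a Hopf algebra $A$, $A^J$ is the Hopf algebra with the same algebra and counit, comultiplication $\Delta^J(h)=J^{-1}\Delta(h)J$ and antipode $S^J(h)=v^{-1}S(h)v$, $v=m(S\otimes\mathrm{id})(J)$. For an abelian subgroup $H$ of $G$, $\widehat H$ is its character group, $e_\chi=\frac{1}{|H|}\sum_{h\in H}\chi(h^{-1})h$ for $\chi\in\widehat H$, and for a 2-cocycle $\omega$ on $\widehat H$ the element $J=\sum\omega(\alpha,\beta)e_\alpha\otimes e_\beta$ is a twist in $kG$. $\chi\in\widehat H$ is $\omega$-regular if $\omega(\chi,\psi)=\omega(\psi,\chi)$ for all $\psi\in\widehat H$; $\omega$ is non-degenerate if only the trivial character is $\omega$-regular. $G(A^* )=\widehat G$ is the group of group-likes of $A^*$ and $Z(A^* )$ its center. *)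

theory Defs
  imports "HOL-Algebra.Group" "HOL-Computational_Algebra.Polynomial"
begin

text \<open>k algebraically closed (of characteristic zero via the type class field_char_0).\<close>
definition alg_closed :: "'k::field itself \<Rightarrow> bool" where
  "alg_closed _ \<longleftrightarrow> (\<forall>p :: 'k poly. degree p \<ge> 1 \<longrightarrow> (\<exists>x. poly p x = 0))"

definition grp_center :: "('a, 'b) monoid_scheme \<Rightarrow> 'a set" where
  "grp_center G = {z \<in> carrier G. \<forall>g \<in> carrier G. z \<otimes>\<^bsub>G\<^esub> g = g \<otimes>\<^bsub>G\<^esub> z}"

text \<open>Character group of an abelian subgroup H: homomorphisms H \<rightarrow> k^*,
  represented as functions vanishing outside H.\<close>
definition chars :: "('a, 'b) monoid_scheme \<Rightarrow> 'a set \<Rightarrow> ('a \<Rightarrow> 'k::field) set" where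
  "chars G H = {\<chi>. (\<forall>x\<in>H. \<forall>y\<in>H. \<chi> (x \<otimes>\<^bsub>G\<^esub> y) = \<chi> x * \<chi> y)
                  \<and> \<chi> \<one>\<^bsub>G\<^esub> = 1 \<and> (\<forall>x. x \<notin> H \<longrightarrow> \<chi> x = 0)}"

definition char_mult :: "'a set \<Rightarrow> ('a \<Rightarrow> 'k::field) \<Rightarrow> ('a \<Rightarrow> 'k) \<Rightarrow> ('a \<Rightarrow> 'k)" where
  "char_mult H \<alpha> \<beta> = (\<lambda>x. if x \<in> H then \<alpha> x * \<beta> x else 0)"

definition char_one :: "'a set \<Rightarrow> ('a \<Rightarrow> 'k::field)" where
  "char_one H = (\<lambda>x. if x \<in> H then 1 else 0)"

definition is_2cocycle :: "('a, 'b) monoid_scheme \<Rightarrow> 'a set \<Rightarrow> (('a \<Rightarrow> 'k::field) \<Rightarrow> ('a \<Rightarrow> 'k) \<Rightarrow> 'k) \<Rightarrow> bool" where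
  "is_2cocycle G H \<omega> \<longleftrightarrow>
     (\<forall>\<alpha>\<in>chars G H. \<forall>\<beta>\<in>chars G H. \<omega> \<alpha> \<beta> \<noteq> 0) \<and>
     (\<forall>\<alpha>\<in>chars G H. \<forall>\<beta>\<in>chars G H. \<forall>\<gamma>\<in>chars G H.
        \<omega> \<alpha> \<beta> * \<omega> (char_mult H \<alpha> \<beta>) \<gamma> = \<omega> \<beta> \<gamma> * \<omega> \<alpha> (char_mult H \<beta> \<gamma>))"

definition omega_regular :: "('a, 'b) monoid_scheme \<Rightarrow> 'a set \<Rightarrow> (('a \<Rightarrow> 'k::field) \<Rightarrow> ('a \<Rightarrow> 'k) \<Rightarrow> 'k) \<Rightarrow> ('a \<Rightarrow> 'k) \<Rightarrow> bool" where
  "omega_regular G H \<omega> \<chi> \<longleftrightarrow> (\<forall>\<psi>\<in>chars G H. \<omega> \<chi> \<psi> = \<omega> \<psi> \<chi>)"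

definition nondegenerate :: "('a, 'b) monoid_scheme \<Rightarrow> 'a set \<Rightarrow> (('a \<Rightarrow> 'k::field) \<Rightarrow> ('a \<Rightarrow> 'k) \<Rightarrow> 'k) \<Rightarrow> bool" where
  "nondegenerate G H \<omega> \<longleftrightarrow> (\<forall>\<chi>\<in>chars G H. omega_regular G H \<omega> \<chi> \<longrightarrow> \<chi> = char_one H)"

text \<open>Elements of kG are coefficient functions on carrier G; elements of kG \<otimes> kG = k[G\<times>G]
  are coefficient functions on carrier G \<times> carrier G.\<close>

definition idem :: "('a, 'b) monoid_scheme \<Rightarrow> 'a set \<Rightarrow> ('a \<Rightarrow> 'k::field) \<Rightarrow> ('a \<Rightarrow> 'k)" where
  "idem G H \<chi> = (\<lambda>x. if x \<in> H then \<chi> (inv\<^bsub>G\<^esub> x) / of_nat (card H) else 0)"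

definition twist_J :: "('a, 'b) monoid_scheme \<Rightarrow> 'a set \<Rightarrow> (('a \<Rightarrow> 'k::field) \<Rightarrow> ('a \<Rightarrow> 'k) \<Rightarrow> 'k) \<Rightarrow> ('a \<times> 'a \<Rightarrow> 'k)" where
  "twist_J G H \<omega> = (\<lambda>(x, y). \<Sum>\<alpha>\<in>chars G H. \<Sum>\<beta>\<in>chars G H. \<omega> \<alpha> \<beta> * idem G H \<alpha> x * idem G H \<beta> y)"

definition tmult :: "('a, 'b) monoid_scheme \<Rightarrow> ('a \<times> 'a \<Rightarrow> 'k::field) \<Rightarrow> ('a \<times> 'a \<Rightarrow> 'k) \<Rightarrow> ('a \<times> 'a \<Rightarrow> 'k)" where
  "tmult G F F' = (\<lambda>(x, y). if x \<in> carrier G \<and> y \<in> carrier G then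
      (\<Sum>(a, b)\<in>carrier G \<times> carrier G. F (a, b) * F' (inv\<^bsub>G\<^esub> a \<otimes>\<^bsub>G\<^esub> x, inv\<^bsub>G\<^esub> b \<otimes>\<^bsub>G\<^esub> y))
    else 0)"

definition tunit :: "('a, 'b) monoid_scheme \<Rightarrow> ('a \<times> 'a \<Rightarrow> 'k::field)" where
  "tunit G = (\<lambda>p. if p = (\<one>\<^bsub>G\<^esub>, \<one>\<^bsub>G\<^esub>) then 1 else 0)"

definition tsupp :: "('a, 'b) monoid_scheme \<Rightarrow> ('a \<times> 'a \<Rightarrow> 'k::field) \<Rightarrow> bool" where
  "tsupp G F \<longleftrightarrow> (\<forall>p. p \<notin> carrier G \<times> carrier G \<longrightarrow> F p = 0)"

definition twist_Jinv :: "('a, 'b) monoid_scheme \<Rightarrow> 'a set \<Rightarrow> (('a \<Rightarrow> 'k::field) \<Rightarrow> ('a \<Rightarrow> 'k) \<Rightarrow> 'k) \<Rightarrow> ('a \<times> 'a \<Rightarrow> 'k)" where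
  "twist_Jinv G H \<omega> = (THE X. tsupp G X \<and> tmult G (twist_J G H \<omega>) X = tunit G
                                 \<and> tmult G X (twist_J G H \<omega>) = tunit G)"

text \<open>Twisted comultiplication on a basis element h \<in> G: J^{-1} (h \<otimes> h) J.\<close>
definition DeltaJ :: "('a, 'b) monoid_scheme \<Rightarrow> 'a set \<Rightarrow> (('a \<Rightarrow> 'k::field) \<Rightarrow> ('a \<Rightarrow> 'k) \<Rightarrow> 'k) \<Rightarrow> 'a \<Rightarrow> ('a \<times> 'a \<Rightarrow> 'k)" where
  "DeltaJ G H \<omega> h = tmult G (tmult G (twist_Jinv G H \<omega>) (\<lambda>p. if p = (h, h) then 1 else 0)) (twist_J G H \<omega>)"

text \<open>The dual A* of A = (kG)^J: linear functionals, determined by their values on G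
  (represented as functions vanishing outside carrier G). Product dual to \<Delta>^J.\<close>
definition dual_mult :: "('a, 'b) monoid_scheme \<Rightarrow> 'a set \<Rightarrow> (('a \<Rightarrow> 'k::field) \<Rightarrow> ('a \<Rightarrow> 'k) \<Rightarrow> 'k) \<Rightarrow> ('a \<Rightarrow> 'k) \<Rightarrow> ('a \<Rightarrow> 'k) \<Rightarrow> ('a \<Rightarrow> 'k)" where
  "dual_mult G H \<omega> \<phi> \<psi> = (\<lambda>h. if h \<in> carrier G then
      (\<Sum>(x, y)\<in>carrier G \<times> carrier G. DeltaJ G H \<omega> h (x, y) * \<phi> x * \<psi> y) else 0)"

definition dual_space :: "('a, 'b) monoid_scheme \<Rightarrow> ('a \<Rightarrow> 'k::field) set" where
  "dual_space G = {\<phi>. \<forall>x. x \<notin> carrier G \<longrightarrow> \<phi> x = 0}"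

text \<open>Group-like elements of A*: \<Delta>(\<phi>) = \<phi> \<otimes> \<phi> (dual to the multiplication of kG) and \<epsilon>(\<phi>) = \<phi>(1) = 1.\<close>
definition dual_grouplikes :: "('a, 'b) monoid_scheme \<Rightarrow> ('a \<Rightarrow> 'k::field) set" where
  "dual_grouplikes G = {\<phi> \<in> dual_space G.
      (\<forall>x\<in>carrier G. \<forall>y\<in>carrier G. \<phi> (x \<otimes>\<^bsub>G\<^esub> y) = \<phi> x * \<phi> y) \<and> \<phi> \<one>\<^bsub>G\<^esub> = 1}"

definition dual_center :: "('a, 'b) monoid_scheme \<Rightarrow> 'a set \<Rightarrow> (('a \<Rightarrow> 'k::field) \<Rightarrow> ('a \<Rightarrow> 'k) \<Rightarrow> 'k) \<Rightarrow> ('a \<Rightarrow> 'k) set" where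
  "dual_center G H \<omega> = {\<phi> \<in> dual_space G.
      \<forall>\<psi>\<in>dual_space G. dual_mult G H \<omega> \<phi> \<psi> = dual_mult G H \<omega> \<psi> \<phi>}"

end

theory Submission
  imports Defs "HOL-Algebra.Multiplicative_Group"
begin

text \<open>
  The group-likes of \<open>A\<^sup>*\<close> are the characters \<open>\<chi>\<close> of \<open>G\<close>, and \<open>\<chi>\<close> is central iff the slices
  \<open>(\<chi> \<otimes> id) \<Delta>\<^sup>J(h)\<close> and \<open>(id \<otimes> \<chi>) \<Delta>\<^sup>J(h)\<close> agree for every \<open>h\<close>. Written in the orthogonal
  idempotents \<open>e\<^sub>\<alpha>\<close> of \<open>kH\<close>, these slices are \<open>\<delta>\<^sub>h\<close> conjugated by \<open>U = \<Sum> \<omega>(c,\<beta>) e\<^sub>\<beta>\<close> and by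
  \<open>V = \<Sum> \<omega>(\<alpha>,c) e\<^sub>\<alpha>\<close>, where \<open>c = \<chi>|\<^sub>H\<close>. If \<open>c = 1\<close> they coincide. Conversely, centrality
  makes \<open>V U\<^sup>-\<^sup>1 = \<Sum> \<omega>(\<alpha>,c)/\<omega>(c,\<alpha>) e\<^sub>\<alpha>\<close> commute with all \<open>\<delta>\<^sub>h\<close>; its coefficients form a
  character of \<open>\<widehat>H\<close>, i.e. evaluation at some \<open>x \<in> H\<close>, so \<open>V U\<^sup>-\<^sup>1 = \<delta>\<^sub>x\<close> and \<open>x\<close> is central,
  hence \<open>x = 1\<close>; then \<open>c\<close> is \<open>\<omega>\<close>-regular and so trivial.

  Thus \<open>G(A\<^sup>*) \<inter> Z(A\<^sup>*)\<close> is the group \<open>T\<close> of characters of \<open>G\<close> trivial on \<open>H\<close>. Orthogonality of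
  characters gives \<open>|G| = |T| \<cdot> |K|\<close> for the common kernel \<open>K\<close> of \<open>T\<close>, a subgroup containing
  \<open>H\<close>, and Lagrange's theorem finishes the proof.
\<close>

section \<open>Characters of finite groups\<close>

definition characters :: "('a, 'b) monoid_scheme \<Rightarrow> ('a \<Rightarrow> 'k::field) set" where
  "characters M = {\<chi>. (\<forall>x\<in>carrier M. \<forall>y\<in>carrier M. \<chi> (x \<otimes>\<^bsub>M\<^esub> y) = \<chi> x * \<chi> y)
     \<and> \<chi> \<one>\<^bsub>M\<^esub> = 1 \<and> (\<forall>x. x \<notin> carrier M \<longrightarrow> \<chi> x = 0)}"

definition trivial_char :: "('a, 'b) monoid_scheme \<Rightarrow> ('a \<Rightarrow> 'k::field)" where
  "trivial_char M = (\<lambda>x. if x \<in> carrier M then 1 else 0)"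

lemma chars_eq_characters: "chars G H = characters (G\<lparr>carrier := H\<rparr>)"
  unfolding chars_def characters_def by simp

lemma characters_carrier_self: "characters (G\<lparr>carrier := carrier G\<rparr>) = characters G"
  unfolding characters_def by simp

lemma characterD:
  assumes "\<chi> \<in> characters M"
  shows character_mult: "x \<in> carrier M \<Longrightarrow> y \<in> carrier M \<Longrightarrow> \<chi> (x \<otimes>\<^bsub>M\<^esub> y) = \<chi> x * \<chi> y"
    and character_one: "\<chi> \<one>\<^bsub>M\<^esub> = 1"
    and character_outside: "x \<notin> carrier M \<Longrightarrow> \<chi> x = 0"
  using assms unfolding characters_def by auto

lemma finite_roots_of_unity:
  assumes "(n::nat) \<ge> 1"
  shows "finite {z::'k::field. z ^ n = 1}"
proof -
  define p :: "'k poly" where "p = Polynomial.monom 1 n - 1"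
  have "Polynomial.coeff p n = 1" using assms unfolding p_def by (simp add: coeff_monom)
  then have "p \<noteq> 0" by auto
  moreover have "poly p z = z ^ n - 1" for z unfolding p_def by (simp add: poly_monom)
  ultimately show ?thesis using poly_roots_finite[of p] by simp
qed

context group begin

lemma character_inv_mult:
  assumes "\<chi> \<in> characters G" "x \<in> carrier G"
  shows "\<chi> (inv x) * \<chi> x = 1"
  using character_mult[OF assms(1) inv_closed[OF assms(2)] assms(2)] character_one[OF assms(1)]
    assms(2) by simp

lemma character_nonzero: "\<chi> \<in> characters G \<Longrightarrow> x \<in> carrier G \<Longrightarrow> \<chi> x \<noteq> 0"
  using character_inv_mult by force

lemma character_inv: "\<chi> \<in> characters G \<Longrightarrow> x \<in> carrier G \<Longrightarrow> \<chi> (inv x) = inverse (\<chi> x)"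
  using character_inv_mult[of \<chi> x] character_nonzero[of \<chi> x] by (simp add: field_simps)

lemma character_nat_pow:
  assumes "\<chi> \<in> characters G" "x \<in> carrier G"
  shows "\<chi> (x [^] (n::nat)) = \<chi> x ^ n"
  by (induction n) (auto simp: characterD[OF assms(1)] assms(2))

lemma character_int_pow:
  assumes "\<chi> \<in> characters G" "x \<in> carrier G"
  shows "\<chi> (x [^] (i::int)) = \<chi> x powi i"
proof (cases "i \<ge> 0")
  case True
  then obtain n where "i = int n" by (metis nonneg_eq_int)
  then show ?thesis using character_nat_pow[OF assms] by (simp add: int_pow_int)
next
  case False
  then obtain n where n: "i = - int n" by (metis nonneg_eq_int neg_0_le_iff_le minus_minus not_le less_imp_le)
  have "\<chi> (x [^] i) = \<chi> (inv (x [^] n))" using n assms(2) by (simp add: int_pow_neg int_pow_int)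
  also have "\<dots> = inverse (\<chi> x ^ n)" using character_inv[OF assms(1)] character_nat_pow[OF assms] assms(2) by simp
  finally show ?thesis using n by (simp add: power_int_minus)
qed

lemma trivial_char_in_characters: "trivial_char G \<in> characters G"
  unfolding characters_def trivial_char_def by auto

lemma characters_mult_closed:
  "\<chi> \<in> characters G \<Longrightarrow> \<psi> \<in> characters G \<Longrightarrow> (\<lambda>x. \<chi> x * \<psi> x) \<in> characters G"
  unfolding characters_def by (auto simp: algebra_simps)

lemma finite_characters:
  assumes fin: "finite (carrier G)"
  shows "finite (characters G :: ('a \<Rightarrow> 'k::field) set)"
proof -
  define R :: "'k set" where "R = {z. z ^ order G = 1}"
  have "order G \<ge> 1" using fin unfolding order_def
    by (metis card_0_eq empty_iff less_one not_less one_closed)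
  then have "finite R" unfolding R_def by (rule finite_roots_of_unity)
  have "(\<lambda>\<chi>. restrict \<chi> (carrier G)) ` characters G \<subseteq> (\<Pi>\<^sub>E x\<in>carrier G. R)"
  proof (rule image_subsetI)
    fix \<chi> :: "'a \<Rightarrow> 'k" assume "\<chi> \<in> characters G"
    then show "restrict \<chi> (carrier G) \<in> (\<Pi>\<^sub>E x\<in>carrier G. R)" unfolding R_def
      using character_nat_pow[of \<chi> _ "order G"] pow_order_eq_1 character_one[of \<chi> G] by auto
  qed
  moreover have "inj_on (\<lambda>\<chi>. restrict \<chi> (carrier G)) (characters G :: ('a \<Rightarrow> 'k) set)"
    by (rule inj_onI) (metis character_outside restrict_apply' ext)
  ultimately show ?thesis
    using finite_PiE[OF fin, of "\<lambda>_. R"] \<open>finite R\<close> by (metis finite_imageD finite_subset)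
qed

lemma sum_left_translate:
  assumes "g \<in> carrier G"
  shows "(\<Sum>x\<in>carrier G. f x) = (\<Sum>x\<in>carrier G. f (g \<otimes> x))"
  using sum.reindex[OF inj_on_cmult[OF assms], of f] surj_const_mult[OF assms] by simp

lemma sum_character:
  assumes "\<chi> \<in> characters G"
  shows "(\<Sum>x\<in>carrier G. \<chi> x) = (if \<chi> = trivial_char G then of_nat (order G) else 0)"
proof (cases "\<chi> = trivial_char G")
  case True then show ?thesis by (simp add: trivial_char_def order_def)
next
  case False
  then obtain g where g: "g \<in> carrier G" "\<chi> g \<noteq> 1"
    using character_outside[OF assms] unfolding trivial_char_def by fastforce
  have "(\<Sum>x\<in>carrier G. \<chi> x) = \<chi> g * (\<Sum>x\<in>carrier G. \<chi> x)"
    by (subst sum_left_translate[OF g(1)]) (simp add: sum_distrib_left character_mult[OF assms g(1)])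
  then have "(1 - \<chi> g) * (\<Sum>x\<in>carrier G. \<chi> x) = 0" by (simp add: algebra_simps)
  then show ?thesis using g(2) False by simp
qed

end

definition character_subgroup :: "('a, 'b) monoid_scheme \<Rightarrow> ('a \<Rightarrow> 'k::field) set \<Rightarrow> bool" where
  "character_subgroup M T \<longleftrightarrow> T \<subseteq> characters M \<and> finite T \<and> trivial_char M \<in> T
     \<and> (\<forall>\<chi>\<in>T. \<forall>\<psi>\<in>T. (\<lambda>x. \<chi> x * \<psi> x) \<in> T)"

definition annihilator :: "('a, 'b) monoid_scheme \<Rightarrow> ('a \<Rightarrow> 'k::field) set \<Rightarrow> 'a set" where
  "annihilator M T = {x \<in> carrier M. \<forall>\<chi>\<in>T. \<chi> x = 1}"

context group begin

lemma sum_character_subgroup: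
  assumes T: "character_subgroup G T" and x: "x \<in> carrier G"
  shows "(\<Sum>\<chi>\<in>T. \<chi> x) = (if x \<in> annihilator G T then of_nat (card T) else 0)"
proof (cases "x \<in> annihilator G T")
  case True then show ?thesis unfolding annihilator_def by (simp add: sum.cong[of T T _ "\<lambda>_. 1"])
next
  case False
  then obtain \<psi> where \<psi>: "\<psi> \<in> T" "\<psi> x \<noteq> 1" using x unfolding annihilator_def by blast
  have T': "T \<subseteq> characters G" "finite T" "\<forall>\<chi>\<in>T. (\<lambda>x. \<psi> x * \<chi> x) \<in> T"
    using T \<psi>(1) unfolding character_subgroup_def by auto
  have inj: "inj_on (\<lambda>\<chi> y. \<psi> y * \<chi> y) T"
  proof (rule inj_onI, rule ext)
    fix \<chi> \<chi>' y assume \<chi>: "\<chi> \<in> T" "\<chi>' \<in> T" and eq: "(\<lambda>y. \<psi> y * \<chi> y) = (\<lambda>y. \<psi> y * \<chi>' y)"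
    show "\<chi> y = \<chi>' y"
    proof (cases "y \<in> carrier G")
      case True
      then show ?thesis using fun_cong[OF eq, of y] character_nonzero[of \<psi> y] T'(1) \<psi>(1) by auto
    next
      case False
      moreover have "\<chi> \<in> characters G" "\<chi>' \<in> characters G" using T'(1) \<chi> by auto
      ultimately show ?thesis using character_outside by metis
    qed
  qed
  then have "(\<lambda>\<chi> y. \<psi> y * \<chi> y) ` T = T" using T' by (intro endo_inj_surj) auto
  then have "(\<Sum>\<chi>\<in>T. \<chi> x) = (\<Sum>\<chi>\<in>T. \<psi> x * \<chi> x)"
    using sum.reindex[OF inj, of "\<lambda>\<chi>. \<chi> x"] by simp
  also have "\<dots> = \<psi> x * (\<Sum>\<chi>\<in>T. \<chi> x)" by (rule sum_distrib_left[symmetric])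
  finally have "(1 - \<psi> x) * (\<Sum>\<chi>\<in>T. \<chi> x) = 0" by (simp add: algebra_simps)
  then show ?thesis using \<psi>(2) False by simp
qed

text \<open>Double counting \<open>\<Sum>\<^sub>x \<Sum>\<^sub>\<chi> \<chi> x\<close>; characteristic zero makes the count exact.\<close>
lemma card_character_subgroup_mult_card_annihilator:
  assumes fin: "finite (carrier G)" and T: "character_subgroup G (T :: ('a \<Rightarrow> 'k::field_char_0) set)"
  shows "card T * card (annihilator G T) = order G"
proof -
  have T': "T \<subseteq> characters G" "finite T" "trivial_char G \<in> T"
    using T unfolding character_subgroup_def by auto
  have "(of_nat (card T * card (annihilator G T)) :: 'k)
      = (\<Sum>x\<in>carrier G. if x \<in> annihilator G T then of_nat (card T) else 0)"
    using sum.inter_filter[OF fin, of "\<lambda>_. (of_nat (card T) :: 'k)" "\<lambda>x. x \<in> annihilator G T"]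
    by (simp add: annihilator_def Collect_conj_eq Int_commute mult.commute)
  also have "\<dots> = (\<Sum>x\<in>carrier G. \<Sum>\<chi>\<in>T. \<chi> x)"
    using sum_character_subgroup[OF T] by simp
  also have "\<dots> = (\<Sum>\<chi>\<in>T. \<Sum>x\<in>carrier G. \<chi> x)" by (rule sum.swap)
  also have "\<dots> = (\<Sum>\<chi>\<in>T. if \<chi> = trivial_char G then of_nat (order G) else 0)"
    by (intro sum.cong refl sum_character) (use T'(1) in auto)
  also have "\<dots> = of_nat (order G)" using T'(2,3) by simp
  finally show ?thesis by (simp only: of_nat_eq_iff)
qed

lemma subgroup_annihilator:
  assumes "T \<subseteq> characters G"
  shows "subgroup (annihilator G T) G"
proof (rule subgroupI)
  show "annihilator G T \<subseteq> carrier G" "annihilator G T \<noteq> {}"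
    unfolding annihilator_def using assms character_one by auto
next
  fix a b assume a: "a \<in> annihilator G T" and b: "b \<in> annihilator G T"
  have "\<chi> (inv a) = 1" "\<chi> (a \<otimes> b) = 1" if "\<chi> \<in> T" for \<chi>
    using a b that subsetD[OF assms that] character_inv[of \<chi> a] character_mult[of \<chi> G a b]
    unfolding annihilator_def by auto
  then show "inv a \<in> annihilator G T" "a \<otimes> b \<in> annihilator G T"
    using a b unfolding annihilator_def by auto
qed

lemma character_subgroup_trivial_on:
  assumes "finite (carrier G)" and "H \<subseteq> carrier G"
  shows "character_subgroup G {\<chi> \<in> characters G. \<forall>x\<in>H. \<chi> x = 1}"
proof -
  have "finite {\<chi> \<in> characters G. \<forall>x\<in>H. \<chi> x = 1}"
    by (rule finite_subset[OF _ finite_characters[OF assms(1)]]) auto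
  then show ?thesis unfolding character_subgroup_def
    using trivial_char_in_characters assms(2) characters_mult_closed by (auto simp: trivial_char_def)
qed

lemma card_subgroup_dvd_card_subgroup:
  assumes "subgroup H G" "subgroup K G" "H \<subseteq> K"
  shows "card H dvd card K"
proof -
  interpret K: group "G\<lparr>carrier := K\<rparr>" using subgroup_imp_group[OF assms(2)] .
  have "card (rcosets\<^bsub>G\<lparr>carrier := K\<rparr>\<^esub> H) * card H = card K"
    using K.lagrange[OF subgroup_incl[OF assms]] by (simp add: order_def)
  then show ?thesis by (metis dvd_triv_right)
qed

end

section \<open>Extending characters of finite abelian groups\<close>

lemma alg_closed_exists_root:
  assumes "alg_closed TYPE('k::field)" "(m::nat) \<ge> 1"
  shows "\<exists>t::'k. t ^ m = c"
proof -
  define p :: "'k poly" where "p = Polynomial.monom 1 m - [:c:]"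
  have "Polynomial.coeff p m = 1" using assms(2) unfolding p_def by (cases m) (auto simp: coeff_monom)
  then have "degree p \<ge> 1" using assms(2) le_degree[of p m] by simp
  then obtain x where "poly p x = 0" using assms(1) unfolding alg_closed_def by blast
  then show ?thesis unfolding p_def by (auto simp: poly_monom)
qed

text \<open>A root of \<open>1 + z + \<dots> + z\<^sup>m\<^sup>-\<^sup>1\<close>; it is not \<open>1\<close> because \<open>m \<noteq> 0\<close> in characteristic zero.\<close>
lemma alg_closed_exists_nontrivial_root_of_unity:
  assumes "alg_closed TYPE('k::field_char_0)" "(m::nat) \<ge> 2"
  shows "\<exists>t::'k. t ^ m = 1 \<and> t \<noteq> 1"
proof -
  define p :: "'k poly" where "p = (\<Sum>i<m. Polynomial.monom 1 i)"
  have "Polynomial.coeff p (m - 1) = 1"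
    using assms(2) unfolding p_def coeff_sum by (simp add: coeff_monom)
  then have "degree p \<ge> 1" using assms(2) le_degree[of p "m - 1"] by simp
  then obtain x where x: "poly p x = 0" using assms(1) unfolding alg_closed_def by blast
  have px: "poly p x = (\<Sum>i<m. x ^ i)" unfolding p_def by (simp add: poly_sum poly_monom)
  then have "x ^ m = 1" using x power_diff_1_eq[of x m] by simp
  moreover have "x \<noteq> 1" using x px assms(2) by auto
  ultimately show ?thesis by blast
qed

lemma (in group) subgroup_characterD:
  assumes L: "subgroup L G" and \<beta>: "\<beta> \<in> characters (G\<lparr>carrier := L\<rparr>)"
  shows subgroup_character_mult: "x \<in> L \<Longrightarrow> y \<in> L \<Longrightarrow> \<beta> (x \<otimes> y) = \<beta> x * \<beta> y"
    and subgroup_character_one: "\<beta> \<one> = 1"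
    and subgroup_character_nonzero: "x \<in> L \<Longrightarrow> \<beta> x \<noteq> 0"
    and subgroup_character_int_pow: "x \<in> L \<Longrightarrow> \<beta> (x [^] (i::int)) = \<beta> x powi i"
proof -
  interpret L: group "G\<lparr>carrier := L\<rparr>" using subgroup_imp_group[OF L] .
  show "x \<in> L \<Longrightarrow> y \<in> L \<Longrightarrow> \<beta> (x \<otimes> y) = \<beta> x * \<beta> y" using character_mult[OF \<beta>] by simp
  show "\<beta> \<one> = 1" using character_one[OF \<beta>] by simp
  show "x \<in> L \<Longrightarrow> \<beta> x \<noteq> 0" using L.character_nonzero[OF \<beta>] by simp
  show "x \<in> L \<Longrightarrow> \<beta> (x [^] (i::int)) = \<beta> x powi i"
    using L.character_int_pow[OF \<beta>, of x i] int_pow_consistent[OF L, of x i] by simp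
qed

context comm_group begin

definition adjoin :: "'a set \<Rightarrow> 'a \<Rightarrow> 'a set" where
  "adjoin L h = {l \<otimes> h [^] (i::int) | l i. l \<in> L}"

lemma subgroup_adjoin:
  assumes L: "subgroup L G" and h: "h \<in> carrier G"
  shows "subgroup (adjoin L h) G"
proof (rule subgroupI)
  have Lc: "L \<subseteq> carrier G" using L subgroup.subset by blast
  show "adjoin L h \<subseteq> carrier G" unfolding adjoin_def using Lc h by auto
  show "adjoin L h \<noteq> {}" unfolding adjoin_def using subgroup.one_closed[OF L] by blast
  fix a b assume "a \<in> adjoin L h" "b \<in> adjoin L h"
  then obtain l i l' j where l: "l \<in> L" "l' \<in> L" and ab: "a = l \<otimes> h [^] (i::int)" "b = l' \<otimes> h [^] (j::int)"
    unfolding adjoin_def by blast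
  have "inv a = inv l \<otimes> h [^] (- i)" using ab l Lc h by (simp add: inv_mult int_pow_neg subsetD)
  then show "inv a \<in> adjoin L h" unfolding adjoin_def using l subgroup.m_inv_closed[OF L] by blast
  have "a \<otimes> b = (l \<otimes> l') \<otimes> h [^] (i + j)" using ab l Lc h by (simp add: int_pow_mult m_ac subsetD)
  then show "a \<otimes> b \<in> adjoin L h" unfolding adjoin_def using l subgroup.m_closed[OF L] by blast
qed

lemma subset_adjoin: "subgroup L G \<Longrightarrow> L \<subseteq> adjoin L h"
  unfolding adjoin_def by (force dest: subgroup.mem_carrier intro: exI[of _ 0])

lemma in_adjoin: "subgroup L G \<Longrightarrow> h \<in> carrier G \<Longrightarrow> h \<in> adjoin L h"
  unfolding adjoin_def by (force dest: subgroup.one_closed intro: exI[of _ 1])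

lemma obtain_least_power_in_subgroup:
  assumes fin: "finite (carrier G)" and L: "subgroup L G" and h: "h \<in> carrier G"
  obtains m :: nat where "m > 0" "h [^] m \<in> L" "\<And>k. 0 < k \<Longrightarrow> k < m \<Longrightarrow> h [^] k \<notin> L"
proof -
  define P where "P = (\<lambda>k::nat. 0 < k \<and> h [^] k \<in> L)"
  have "order G > 0" using fin unfolding order_def by (metis card_gt_0_iff empty_iff one_closed)
  then have "P (order G)" unfolding P_def using pow_order_eq_1[OF h] subgroup.one_closed[OF L] by simp
  then have "P (LEAST k. P k)" by (rule LeastI)
  then show ?thesis using that not_less_Least unfolding P_def by blast
qed

end

text \<open>One step of the extension: from \<open>L\<close> to \<open>adjoin L h\<close>, where \<open>m\<close> is the order of \<open>h\<close> modulo \<open>L\<close>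
  and \<open>h\<close> is sent to an \<open>m\<close>-th root \<open>t\<close> of \<open>\<beta>(h\<^sup>m)\<close>.\<close>
locale character_extension = comm_group G for G (structure) +
  fixes L :: "'a set" and h :: 'a and m :: nat and \<beta> :: "'a \<Rightarrow> 'k::field" and t :: 'k
  assumes subgroup_L: "subgroup L G" and h_carrier: "h \<in> carrier G"
    and m_pos: "m > 0" and pow_m_in_L: "h [^] m \<in> L"
    and pow_notin_L: "\<And>k. 0 < k \<Longrightarrow> k < m \<Longrightarrow> h [^] k \<notin> L"
    and character_\<beta>: "\<beta> \<in> characters (G\<lparr>carrier := L\<rparr>)"
    and t_root: "t ^ m = \<beta> (h [^] m)"
begin

lemma L_carrier: "L \<subseteq> carrier G"
  using subgroup.subset[OF subgroup_L] .

lemma t_nonzero: "t \<noteq> 0"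
  using t_root subgroup_character_nonzero[OF subgroup_L character_\<beta> pow_m_in_L] m_pos
  by (metis zero_power)

lemma dvd_if_int_pow_in_L:
  assumes k: "h [^] (k::int) \<in> L"
  shows "int m dvd k"
proof -
  define r where "r = k mod int m"
  have r: "0 \<le> r" "r < int m" unfolding r_def using m_pos by auto
  have hm: "(h [^] m) [^] (k div int m) \<in> L" using subgroup_int_pow_closed[OF subgroup_L pow_m_in_L] .
  have "h [^] k = h [^] (int m * (k div int m)) \<otimes> h [^] r"
    using h_carrier by (simp add: r_def flip: int_pow_mult)
  also have "h [^] (int m * (k div int m)) = (h [^] m) [^] (k div int m)"
    using int_pow_pow[OF h_carrier] int_pow_int by metis
  finally have "h [^] k = (h [^] m) [^] (k div int m) \<otimes> h [^] r" .
  then have "h [^] r = inv ((h [^] m) [^] (k div int m)) \<otimes> h [^] k"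
    using h_carrier by (simp add: inv_solve_left)
  then have "h [^] nat r \<in> L"
    using k hm r subgroup_L by (simp add: subgroup.m_closed subgroup.m_inv_closed int_pow_int[symmetric])
  then have "r = 0" using pow_notin_L[of "nat r"] r by linarith
  then show ?thesis unfolding r_def by auto
qed

lemma extension_well_defined:
  assumes l: "l \<in> L" "l' \<in> L" and eq: "l \<otimes> h [^] (i::int) = l' \<otimes> h [^] (j::int)"
  shows "\<beta> l * t powi i = \<beta> l' * t powi j"
proof -
  have lc: "l \<in> carrier G" "l' \<in> carrier G" using l L_carrier by auto
  have "l' = (l \<otimes> h [^] i) \<otimes> inv (h [^] j)"
    using inv_solve_right[of l' "l \<otimes> h [^] i" "h [^] j"] lc h_carrier eq by simp
  also have "\<dots> = l \<otimes> h [^] (i - j)" using lc h_carrier by (simp add: int_pow_diff m_assoc)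
  finally have l': "l' = l \<otimes> h [^] (i - j)" .
  then have "inv l \<otimes> l' = h [^] (i - j)"
    using inv_solve_left[of "h [^] (i - j)" l l'] lc h_carrier by simp
  then have hL: "h [^] (i - j) \<in> L"
    using l subgroup_L by (metis subgroup.m_closed subgroup.m_inv_closed)
  obtain q where q: "i - j = int m * q" using dvd_if_int_pow_in_L[OF hL] by (metis dvdE)
  have "h [^] (i - j) = (h [^] m) [^] q" using q int_pow_pow[OF h_carrier] int_pow_int by metis
  then have "\<beta> (h [^] (i - j)) = \<beta> (h [^] m) powi q"
    using subgroup_character_int_pow[OF subgroup_L character_\<beta> pow_m_in_L] by simp
  also have "\<dots> = t powi (i - j)" using q t_root by (simp add: power_int_mult)
  finally have "\<beta> l' = \<beta> l * t powi (i - j)"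
    using l' subgroup_character_mult[OF subgroup_L character_\<beta> l(1) hL] by simp
  then have "\<beta> l' * t powi j = \<beta> l * (t powi (i - j) * t powi j)" by simp
  also have "t powi (i - j) * t powi j = t powi i" using t_nonzero by (simp flip: power_int_add)
  finally show ?thesis by simp
qed

definition extended_char :: "'a \<Rightarrow> 'k" where
  "extended_char g = (if g \<in> adjoin L h then
     (SOME v. \<exists>l i. l \<in> L \<and> g = l \<otimes> h [^] (i::int) \<and> v = \<beta> l * t powi i) else 0)"

lemma extended_char_eq:
  assumes l: "l \<in> L"
  shows "extended_char (l \<otimes> h [^] (i::int)) = \<beta> l * t powi i"
proof -
  let ?g = "l \<otimes> h [^] i"
  have "\<exists>l' i'. l' \<in> L \<and> ?g = l' \<otimes> h [^] (i'::int)
      \<and> (SOME v. \<exists>l i. l \<in> L \<and> ?g = l \<otimes> h [^] (i::int) \<and> v = \<beta> l * t powi i) = \<beta> l' * t powi i'"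
    using someI_ex[of "\<lambda>v. \<exists>l' i'. l' \<in> L \<and> ?g = l' \<otimes> h [^] (i'::int) \<and> v = \<beta> l' * t powi i'"] l
    by blast
  moreover have "?g \<in> adjoin L h" unfolding adjoin_def using l by blast
  ultimately show ?thesis unfolding extended_char_def using extension_well_defined[OF l] by force
qed

lemma extended_char_on_L: "l \<in> L \<Longrightarrow> extended_char l = \<beta> l"
  using extended_char_eq[of l 0] L_carrier by (simp add: subsetD)

lemma extended_char_generator: "extended_char h = t"
  using extended_char_eq[OF subgroup.one_closed[OF subgroup_L], of 1] h_carrier
    subgroup_character_one[OF subgroup_L character_\<beta>] by simp

lemma extended_char_in_characters: "extended_char \<in> characters (G\<lparr>carrier := adjoin L h\<rparr>)"
  unfolding characters_def
proof (intro CollectI conjI allI impI ballI)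
  fix x y assume "x \<in> carrier (G\<lparr>carrier := adjoin L h\<rparr>)" "y \<in> carrier (G\<lparr>carrier := adjoin L h\<rparr>)"
  then obtain l i l' j where l: "l \<in> L" "l' \<in> L" and xy: "x = l \<otimes> h [^] (i::int)" "y = l' \<otimes> h [^] (j::int)"
    unfolding adjoin_def by auto
  have "x \<otimes> y = (l \<otimes> l') \<otimes> h [^] (i + j)"
    using xy l L_carrier h_carrier by (simp add: int_pow_mult m_ac subsetD)
  then have "extended_char (x \<otimes> y) = \<beta> (l \<otimes> l') * t powi (i + j)"
    using extended_char_eq subgroup.m_closed[OF subgroup_L l] by simp
  also have "\<dots> = extended_char x * extended_char y"
    using subgroup_character_mult[OF subgroup_L character_\<beta> l] t_nonzero xy l extended_char_eq
    by (simp add: power_int_add)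
  finally show "extended_char (x \<otimes>\<^bsub>G\<lparr>carrier := adjoin L h\<rparr>\<^esub> y) = extended_char x * extended_char y"
    by simp
next
  show "extended_char \<one>\<^bsub>G\<lparr>carrier := adjoin L h\<rparr>\<^esub> = 1"
    using extended_char_on_L[OF subgroup.one_closed[OF subgroup_L]]
      subgroup_character_one[OF subgroup_L character_\<beta>] by simp
qed (simp add: extended_char_def)

end

context comm_group begin

lemma exists_character_extension:
  assumes fin: "finite (carrier G)" and ac: "alg_closed TYPE('k::field)"
  shows "subgroup L G \<Longrightarrow> (\<beta>::'a \<Rightarrow> 'k) \<in> characters (G\<lparr>carrier := L\<rparr>)
           \<Longrightarrow> \<exists>\<chi>\<in>characters G. \<forall>l\<in>L. \<chi> l = \<beta> l"
proof (induction "card (carrier G - L)" arbitrary: L \<beta> rule: less_induct)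
  case less
  show ?case
  proof (cases "L = carrier G")
    case True then show ?thesis using less.prems characters_carrier_self by metis
  next
    case False
    then obtain h where h: "h \<in> carrier G" "h \<notin> L" using subgroup.subset[OF less.prems(1)] by blast
    obtain m :: nat where m: "m > 0" "h [^] m \<in> L" "\<And>k. 0 < k \<Longrightarrow> k < m \<Longrightarrow> h [^] k \<notin> L"
      using obtain_least_power_in_subgroup[OF fin less.prems(1) h(1)] by blast
    obtain t :: 'k where "t ^ m = \<beta> (h [^] m)" using alg_closed_exists_root[OF ac, of m] m(1) by auto
    then interpret E: character_extension G L h m \<beta> t
      using less.prems h(1) m
      by (intro character_extension.intro comm_group_axioms character_extension_axioms.intro) auto
    have "carrier G - adjoin L h \<subset> carrier G - L"
      using subset_adjoin[OF less.prems(1)] in_adjoin[OF less.prems(1) h(1)] h by blast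
    then have "card (carrier G - adjoin L h) < card (carrier G - L)"
      using fin by (meson finite_Diff psubset_card_mono)
    then obtain \<chi> where \<chi>: "\<chi> \<in> characters G" "\<forall>l\<in>adjoin L h. \<chi> l = E.extended_char l"
      using less.hyps[OF _ subgroup_adjoin[OF less.prems(1) h(1)] E.extended_char_in_characters]
      by blast
    have "\<forall>l\<in>L. \<chi> l = \<beta> l"
      using \<chi>(2) E.extended_char_on_L subset_adjoin[OF less.prems(1), of h] by auto
    then show ?thesis using \<chi>(1) by blast
  qed
qed

lemma characters_separate_points:
  assumes fin: "finite (carrier G)" and ac: "alg_closed TYPE('k::field_char_0)"
    and x: "x \<in> carrier G" "x \<noteq> \<one>"
  shows "\<exists>\<chi>::'a \<Rightarrow> 'k. \<chi> \<in> characters G \<and> \<chi> x \<noteq> 1"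
proof -
  have L: "subgroup {\<one>} G" by (rule triv_subgroup)
  obtain m :: nat where m: "m > 0" "x [^] m \<in> {\<one>}" "\<And>k. 0 < k \<Longrightarrow> k < m \<Longrightarrow> x [^] k \<notin> {\<one>}"
    using obtain_least_power_in_subgroup[OF fin L x(1)] by blast
  have "m \<noteq> 1" using m(2) x by auto
  then have "m \<ge> 2" using m(1) by linarith
  then obtain t :: 'k where t: "t ^ m = 1" "t \<noteq> 1"
    using alg_closed_exists_nontrivial_root_of_unity[OF ac] by blast
  define \<beta> :: "'a \<Rightarrow> 'k" where "\<beta> = trivial_char (G\<lparr>carrier := {\<one>}\<rparr>)"
  interpret E: character_extension G "{\<one>}" x m \<beta> t
    using L m x t group.trivial_char_in_characters[OF subgroup_imp_group[OF L]]
    by (intro character_extension.intro comm_group_axioms character_extension_axioms.intro)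
      (auto simp: \<beta>_def trivial_char_def)
  obtain \<chi> where "\<chi> \<in> characters G" "\<forall>l\<in>adjoin {\<one>} x. \<chi> l = E.extended_char l"
    using exists_character_extension[OF fin ac subgroup_adjoin[OF L x(1)] E.extended_char_in_characters]
    by blast
  then show ?thesis using E.extended_char_generator in_adjoin[OF L x(1)] t(2) by auto
qed

end

section \<open>The group algebra as a convolution algebra\<close>

definition conv :: "('a, 'b) monoid_scheme \<Rightarrow> ('a \<Rightarrow> 'k::field) \<Rightarrow> ('a \<Rightarrow> 'k) \<Rightarrow> ('a \<Rightarrow> 'k)" where
  "conv M f g = (\<lambda>x. if x \<in> carrier M then (\<Sum>a\<in>carrier M. f a * g (inv\<^bsub>M\<^esub> a \<otimes>\<^bsub>M\<^esub> x)) else 0)"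

definition delta :: "'a \<Rightarrow> ('a \<Rightarrow> 'k::field)" where
  "delta h = (\<lambda>x. if x = h then 1 else 0)"

definition supported :: "('a, 'b) monoid_scheme \<Rightarrow> ('a \<Rightarrow> 'k::field) \<Rightarrow> bool" where
  "supported M f \<longleftrightarrow> (\<forall>x. x \<notin> carrier M \<longrightarrow> f x = 0)"

definition tens :: "('a \<Rightarrow> 'k::field) \<Rightarrow> ('a \<Rightarrow> 'k) \<Rightarrow> ('a \<times> 'a \<Rightarrow> 'k)" where
  "tens f g = (\<lambda>(x, y). f x * g y)"

context group begin

lemma supported_conv: "supported G (conv G f g)"
  unfolding supported_def conv_def by simp

lemma conv_scale_left: "conv G (\<lambda>x. c * f x) g = (\<lambda>x. c * conv G f g x)"
  unfolding conv_def by (auto simp: sum_distrib_left mult.assoc)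

lemma conv_scale_right: "conv G f (\<lambda>x. c * g x) = (\<lambda>x. c * conv G f g x)"
  unfolding conv_def by (auto simp: sum_distrib_left algebra_simps)

lemma conv_sum_left:
  "conv G (\<lambda>x. \<Sum>i\<in>I. c i * f i x) g = (\<lambda>x. \<Sum>i\<in>I. c i * conv G (f i) g x)"
proof
  fix x
  have "(\<Sum>a\<in>carrier G. (\<Sum>i\<in>I. c i * f i a) * g (inv a \<otimes> x))
      = (\<Sum>i\<in>I. c i * (\<Sum>a\<in>carrier G. f i a * g (inv a \<otimes> x)))"
    unfolding sum_distrib_right sum_distrib_left mult.assoc by (rule sum.swap)
  then show "conv G (\<lambda>x. \<Sum>i\<in>I. c i * f i x) g x = (\<Sum>i\<in>I. c i * conv G (f i) g x)"
    unfolding conv_def by simp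
qed

lemma conv_sum_right:
  "conv G g (\<lambda>x. \<Sum>i\<in>I. c i * f i x) = (\<lambda>x. \<Sum>i\<in>I. c i * conv G g (f i) x)"
proof
  fix x
  have "(\<Sum>a\<in>carrier G. g a * (\<Sum>i\<in>I. c i * f i (inv a \<otimes> x)))
      = (\<Sum>i\<in>I. c i * (\<Sum>a\<in>carrier G. g a * f i (inv a \<otimes> x)))"
    unfolding sum_distrib_left mult.left_commute[of "g _"] by (rule sum.swap)
  then show "conv G g (\<lambda>x. \<Sum>i\<in>I. c i * f i x) x = (\<Sum>i\<in>I. c i * conv G g (f i) x)"
    unfolding conv_def by simp
qed

lemma tmult_eq_conv: "tmult G F F' = conv (G \<times>\<times> G) F F'"
proof
  fix p :: "'a \<times> 'a"
  obtain x y where p: "p = (x, y)" by fastforce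
  have "(\<Sum>(a, b)\<in>carrier G \<times> carrier G. F (a, b) * F' (inv a \<otimes> x, inv b \<otimes> y))
      = (\<Sum>q\<in>carrier (G \<times>\<times> G). F q * F' (inv\<^bsub>G \<times>\<times> G\<^esub> q \<otimes>\<^bsub>G \<times>\<times> G\<^esub> (x, y)))"
    by (intro sum.cong) (auto simp: inv_DirProd[OF is_group is_group])
  then show "tmult G F F' p = conv (G \<times>\<times> G) F F' p"
    unfolding tmult_def conv_def p by auto
qed

lemma tmult_sum_left:
  "tmult G (\<lambda>z. \<Sum>i\<in>I. c i * F i z) F' = (\<lambda>z. \<Sum>i\<in>I. c i * tmult G (F i) F' z)"
  unfolding tmult_eq_conv using group.conv_sum_left[OF DirProd_group[OF is_group is_group]] .

lemma tmult_sum_right: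
  "tmult G F' (\<lambda>z. \<Sum>i\<in>I. c i * F i z) = (\<lambda>z. \<Sum>i\<in>I. c i * tmult G F' (F i) z)"
  unfolding tmult_eq_conv using group.conv_sum_right[OF DirProd_group[OF is_group is_group]] .

lemma tmult_tens:
  "tmult G (tens f1 f2) (tens g1 g2) = (\<lambda>(x, y). conv G f1 g1 x * conv G f2 g2 y)"
proof
  fix p :: "'a \<times> 'a"
  obtain x y where p: "p = (x, y)" by fastforce
  have "(\<Sum>(a, b)\<in>carrier G \<times> carrier G. tens f1 f2 (a, b) * tens g1 g2 (inv a \<otimes> x, inv b \<otimes> y))
      = (\<Sum>a\<in>carrier G. f1 a * g1 (inv a \<otimes> x)) * (\<Sum>b\<in>carrier G. f2 b * g2 (inv b \<otimes> y))"
    unfolding tens_def sum_product sum.cartesian_product by (intro sum.cong) (auto simp: algebra_simps)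
  then show "tmult G (tens f1 f2) (tens g1 g2) p = (\<lambda>(x, y). conv G f1 g1 x * conv G f2 g2 y) p"
    unfolding tmult_def conv_def p by auto
qed

lemma center_if_delta_class_function:
  assumes z: "z \<in> carrier G"
    and class_fun: "\<And>h x. h \<in> carrier G \<Longrightarrow> x \<in> carrier G \<Longrightarrow>
      (delta z (x \<otimes> inv h) :: 'k::field) = delta z (inv h \<otimes> x)"
  shows "z \<in> grp_center G"
proof -
  have "z \<otimes> h = h \<otimes> z" if h: "h \<in> carrier G" for h
  proof -
    have "(1::'k) = delta z (z \<otimes> h \<otimes> inv h)" using h z by (simp add: m_assoc delta_def)
    also have "\<dots> = delta z (inv h \<otimes> (z \<otimes> h))" using class_fun h z by simp
    finally have "inv h \<otimes> (z \<otimes> h) = z" by (simp add: delta_def split: if_splits)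
    then show ?thesis using h z by (metis inv_solve_left m_closed)
  qed
  then show ?thesis unfolding grp_center_def using z by simp
qed

end

locale finite_group = group +
  assumes finite_carrier: "finite (carrier G)"
begin

lemma conv_assoc: "conv G (conv G f g) h = conv G f (conv G g h)"
proof
  fix x show "conv G (conv G f g) h x = conv G f (conv G g h) x"
  proof (cases "x \<in> carrier G")
    case x: True
    have "conv G (conv G f g) h x
        = (\<Sum>b\<in>carrier G. \<Sum>a\<in>carrier G. f b * (g (inv b \<otimes> a) * h (inv a \<otimes> x)))"
      unfolding conv_def using x sum.swap[of _ "carrier G" "carrier G"]
      by (simp add: sum_distrib_right mult.assoc)
    also have "\<dots> = (\<Sum>b\<in>carrier G. \<Sum>c\<in>carrier G. f b * (g c * h (inv c \<otimes> (inv b \<otimes> x))))"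
    proof (rule sum.cong[OF refl])
      fix b assume b: "b \<in> carrier G"
      have "inv b \<otimes> (b \<otimes> c) = c" "inv (b \<otimes> c) \<otimes> x = inv c \<otimes> (inv b \<otimes> x)" if "c \<in> carrier G" for c
        using b x that by (simp_all add: m_assoc[symmetric] inv_mult_group)
      then show "(\<Sum>a\<in>carrier G. f b * (g (inv b \<otimes> a) * h (inv a \<otimes> x)))
          = (\<Sum>c\<in>carrier G. f b * (g c * h (inv c \<otimes> (inv b \<otimes> x))))"
        by (subst sum_left_translate[OF b]) simp
    qed
    also have "\<dots> = conv G f (conv G g h) x"
      unfolding conv_def using x by (simp add: sum_distrib_left)
    finally show ?thesis .
  qed (simp add: conv_def)
qed

lemma conv_delta_left:
  assumes "h \<in> carrier G"
  shows "conv G (delta h) f = (\<lambda>x. if x \<in> carrier G then f (inv h \<otimes> x) else 0)"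
proof
  fix x
  have "(\<Sum>a\<in>carrier G. delta h a * f (inv a \<otimes> x)) = (\<Sum>a\<in>carrier G. if a = h then f (inv a \<otimes> x) else 0)"
    unfolding delta_def by (intro sum.cong) auto
  then show "conv G (delta h) f x = (if x \<in> carrier G then f (inv h \<otimes> x) else 0)"
    unfolding conv_def using assms finite_carrier by simp
qed

lemma conv_delta_right:
  assumes h: "h \<in> carrier G"
  shows "conv G f (delta h) = (\<lambda>x. if x \<in> carrier G then f (x \<otimes> inv h) else 0)"
proof
  fix x show "conv G f (delta h) x = (if x \<in> carrier G then f (x \<otimes> inv h) else 0)"
  proof (cases "x \<in> carrier G")
    case x: True
    have "(inv a \<otimes> x = h) = (x \<otimes> inv h = a)" if "a \<in> carrier G" for a
      using that x h by (metis inv_closed inv_solve_left inv_solve_right m_closed)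
    then have "(\<Sum>a\<in>carrier G. f a * delta h (inv a \<otimes> x)) = (\<Sum>a\<in>carrier G. if x \<otimes> inv h = a then f a else 0)"
      unfolding delta_def by (intro sum.cong) auto
    then show ?thesis unfolding conv_def using x h finite_carrier by simp
  qed (simp add: conv_def)
qed

lemma conv_delta_one_left: "supported G f \<Longrightarrow> conv G (delta \<one>) f = f"
  unfolding conv_delta_left[OF one_closed] supported_def by auto

lemma conv_delta_one_right: "supported G f \<Longrightarrow> conv G f (delta \<one>) = f"
  unfolding conv_delta_right[OF one_closed] supported_def by auto

lemma finite_group_DirProd: "finite_group (G \<times>\<times> G)"
  unfolding finite_group_def finite_group_axioms_def
  using DirProd_group[OF is_group is_group] finite_carrier by simp

lemma tmult_assoc: "tmult G (tmult G A B) C = tmult G A (tmult G B C)"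
  unfolding tmult_eq_conv using finite_group.conv_assoc[OF finite_group_DirProd] .

lemma tunit_eq_delta: "tunit G = delta (\<one>, \<one>)"
  unfolding tunit_def delta_def by simp

lemma tmult_tunit_left: "tsupp G F \<Longrightarrow> tmult G (tunit G) F = F"
  unfolding tmult_eq_conv tunit_eq_delta tsupp_def
  using finite_group.conv_delta_one_left[OF finite_group_DirProd] by (simp add: supported_def)

lemma tmult_tunit_right: "tsupp G F \<Longrightarrow> tmult G F (tunit G) = F"
  unfolding tmult_eq_conv tunit_eq_delta tsupp_def
  using finite_group.conv_delta_one_right[OF finite_group_DirProd] by (simp add: supported_def)

end

section \<open>Slicing \<open>kG \<otimes> kG\<close> by a character\<close>

text \<open>\<open>slice_left M \<chi>\<close> is \<open>\<chi> \<otimes> id\<close> and \<open>slice_right M \<chi>\<close> is \<open>id \<otimes> \<chi>\<close>.\<close>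

definition slice_left :: "('a, 'b) monoid_scheme \<Rightarrow> ('a \<Rightarrow> 'k::field) \<Rightarrow> ('a \<times> 'a \<Rightarrow> 'k) \<Rightarrow> ('a \<Rightarrow> 'k)" where
  "slice_left M \<chi> F = (\<lambda>y. if y \<in> carrier M then (\<Sum>x\<in>carrier M. F (x, y) * \<chi> x) else 0)"

definition slice_right :: "('a, 'b) monoid_scheme \<Rightarrow> ('a \<Rightarrow> 'k::field) \<Rightarrow> ('a \<times> 'a \<Rightarrow> 'k) \<Rightarrow> ('a \<Rightarrow> 'k)" where
  "slice_right M \<chi> F = slice_left M \<chi> (F \<circ> prod.swap)"

context finite_group begin

lemma sum_translate_character:
  assumes \<chi>: "\<chi> \<in> characters G" and a: "a \<in> carrier G"
  shows "(\<Sum>x\<in>carrier G. K (inv a \<otimes> x) * \<chi> x) = \<chi> a * (\<Sum>c\<in>carrier G. K c * \<chi> c)"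
proof -
  have "(\<Sum>x\<in>carrier G. K (inv a \<otimes> x) * \<chi> x) = (\<Sum>c\<in>carrier G. K (inv a \<otimes> (a \<otimes> c)) * \<chi> (a \<otimes> c))"
    by (rule sum_left_translate[OF a])
  also have "\<dots> = (\<Sum>c\<in>carrier G. \<chi> a * (K c * \<chi> c))"
    using a character_mult[OF \<chi> a] by (intro sum.cong) (simp_all add: m_assoc[symmetric])
  finally show ?thesis by (simp add: sum_distrib_left)
qed

lemma tmult_swap: "tmult G (F \<circ> prod.swap) (F' \<circ> prod.swap) = tmult G F F' \<circ> prod.swap"
proof
  fix p :: "'a \<times> 'a"
  obtain x y where p: "p = (x, y)" by fastforce
  have "(\<Sum>a\<in>carrier G. \<Sum>b\<in>carrier G. F (b, a) * F' (inv b \<otimes> y, inv a \<otimes> x))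
      = (\<Sum>b\<in>carrier G. \<Sum>a\<in>carrier G. F (b, a) * F' (inv b \<otimes> y, inv a \<otimes> x))"
    by (rule sum.swap)
  then show "tmult G (F \<circ> prod.swap) (F' \<circ> prod.swap) p = (tmult G F F' \<circ> prod.swap) p"
    unfolding tmult_def p by (auto simp: sum.cartesian_product[symmetric])
qed

lemma slice_left_tmult:
  assumes chi: "\<chi> \<in> characters G"
  shows "slice_left G \<chi> (tmult G F F') = conv G (slice_left G \<chi> F) (slice_left G \<chi> F')"
proof
  fix y show "slice_left G \<chi> (tmult G F F') y = conv G (slice_left G \<chi> F) (slice_left G \<chi> F') y"
  proof (cases "y \<in> carrier G")
    case y: True
    have "slice_left G \<chi> (tmult G F F') y
        = (\<Sum>x\<in>carrier G. (\<Sum>a\<in>carrier G. \<Sum>b\<in>carrier G. F (a, b) * F' (inv a \<otimes> x, inv b \<otimes> y)) * \<chi> x)"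
      unfolding slice_left_def tmult_def using y by (simp add: sum.cartesian_product)
    also have "\<dots> = (\<Sum>a\<in>carrier G. \<Sum>b\<in>carrier G. F (a, b) * (\<Sum>x\<in>carrier G. F' (inv a \<otimes> x, inv b \<otimes> y) * \<chi> x))"
    proof -
      have "(\<Sum>x\<in>carrier G. (\<Sum>a\<in>carrier G. \<Sum>b\<in>carrier G. F (a, b) * F' (inv a \<otimes> x, inv b \<otimes> y)) * \<chi> x)
          = (\<Sum>x\<in>carrier G. \<Sum>a\<in>carrier G. \<Sum>b\<in>carrier G. F (a, b) * (F' (inv a \<otimes> x, inv b \<otimes> y) * \<chi> x))"
        by (simp add: sum_distrib_right mult.assoc)
      also have "\<dots> = (\<Sum>a\<in>carrier G. \<Sum>x\<in>carrier G. \<Sum>b\<in>carrier G. F (a, b) * (F' (inv a \<otimes> x, inv b \<otimes> y) * \<chi> x))"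
        by (rule sum.swap)
      also have "\<dots> = (\<Sum>a\<in>carrier G. \<Sum>b\<in>carrier G. \<Sum>x\<in>carrier G. F (a, b) * (F' (inv a \<otimes> x, inv b \<otimes> y) * \<chi> x))"
        by (rule sum.cong[OF refl], rule sum.swap)
      finally show ?thesis by (simp add: sum_distrib_left)
    qed
    also have "\<dots> = (\<Sum>a\<in>carrier G. \<Sum>b\<in>carrier G. F (a, b) * (\<chi> a * slice_left G \<chi> F' (inv b \<otimes> y)))"
    proof (intro sum.cong refl)
      fix a b assume a: "a \<in> carrier G" and b: "b \<in> carrier G"
      have "(\<Sum>x\<in>carrier G. F' (inv a \<otimes> x, inv b \<otimes> y) * \<chi> x) = \<chi> a * (\<Sum>c\<in>carrier G. F' (c, inv b \<otimes> y) * \<chi> c)"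
        using sum_translate_character[OF chi a, of "\<lambda>u. F' (u, inv b \<otimes> y)"] by simp
      then show "F (a, b) * (\<Sum>x\<in>carrier G. F' (inv a \<otimes> x, inv b \<otimes> y) * \<chi> x) = F (a, b) * (\<chi> a * slice_left G \<chi> F' (inv b \<otimes> y))"
        unfolding slice_left_def using b y by simp
    qed
    also have "\<dots> = (\<Sum>b\<in>carrier G. \<Sum>a\<in>carrier G. F (a, b) * (\<chi> a * slice_left G \<chi> F' (inv b \<otimes> y)))"
      by (rule sum.swap)
    also have "\<dots> = (\<Sum>b\<in>carrier G. slice_left G \<chi> F b * slice_left G \<chi> F' (inv b \<otimes> y))"
      unfolding slice_left_def by (intro sum.cong refl) (simp add: sum_distrib_right algebra_simps)
    also have "\<dots> = conv G (slice_left G \<chi> F) (slice_left G \<chi> F') y" unfolding conv_def using y by simp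
    finally show ?thesis .
  qed (simp add: slice_left_def conv_def)
qed

lemma slice_right_tmult:
  "\<chi> \<in> characters G \<Longrightarrow> slice_right G \<chi> (tmult G F F') = conv G (slice_right G \<chi> F) (slice_right G \<chi> F')"
  unfolding slice_right_def tmult_swap[symmetric] by (rule slice_left_tmult)

lemma slice_left_delta_diag:
  assumes h: "h \<in> carrier G"
  shows "slice_left G \<chi> (delta (h, h)) = (\<lambda>y. \<chi> h * delta h y)"
proof
  fix y
  have "(\<Sum>x\<in>carrier G. delta (h, h) (x, y) * \<chi> x) = (\<Sum>x\<in>carrier G. if x = h then delta h y * \<chi> x else 0)"
    unfolding delta_def by (intro sum.cong) auto
  then show "slice_left G \<chi> (delta (h, h)) y = \<chi> h * delta h y"
    unfolding slice_left_def using h finite_carrier by (auto simp: delta_def)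
qed

lemma slice_right_delta_diag:
  assumes "h \<in> carrier G"
  shows "slice_right G \<chi> (delta (h, h)) = (\<lambda>y. \<chi> h * delta h y)"
proof -
  have swap: "delta (h, h) \<circ> prod.swap = delta (h, h)" by (auto simp: delta_def)
  show ?thesis unfolding slice_right_def swap by (rule slice_left_delta_diag[OF assms])
qed

lemma slice_right_eq:
  "slice_right M \<chi> F = (\<lambda>x. if x \<in> carrier M then (\<Sum>y\<in>carrier M. F (x, y) * \<chi> y) else 0)"
  unfolding slice_right_def slice_left_def by (intro ext) simp

lemma sum_mult_delta: "y \<in> carrier G \<Longrightarrow> (\<Sum>x\<in>carrier G. f x * delta y x) = f y"
  unfolding delta_def using finite_carrier by (simp add: if_distrib[of "\<lambda>u. _ * u"] cong: if_cong)

lemma dual_mult_eq_slice_left: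
  assumes h: "h \<in> carrier G"
  shows "dual_mult G H \<omega> \<chi> \<psi> h = (\<Sum>y\<in>carrier G. slice_left G \<chi> (DeltaJ G H \<omega> h) y * \<psi> y)"
proof -
  have "dual_mult G H \<omega> \<chi> \<psi> h = (\<Sum>x\<in>carrier G. \<Sum>y\<in>carrier G. DeltaJ G H \<omega> h (x, y) * \<chi> x * \<psi> y)"
    unfolding dual_mult_def using h by (simp add: sum.cartesian_product)
  also have "\<dots> = (\<Sum>y\<in>carrier G. \<Sum>x\<in>carrier G. DeltaJ G H \<omega> h (x, y) * \<chi> x * \<psi> y)"
    by (rule sum.swap)
  finally show ?thesis unfolding slice_left_def by (simp add: sum_distrib_right)
qed

lemma dual_mult_eq_slice_right:
  assumes h: "h \<in> carrier G"
  shows "dual_mult G H \<omega> \<psi> \<chi> h = (\<Sum>x\<in>carrier G. slice_right G \<chi> (DeltaJ G H \<omega> h) x * \<psi> x)"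
  unfolding dual_mult_def slice_right_eq using h
  by (simp add: sum.cartesian_product sum_distrib_left sum_distrib_right mult_ac)

lemma dual_center_iff_slices:
  assumes "\<chi> \<in> dual_space G"
  shows "\<chi> \<in> dual_center G H \<omega> \<longleftrightarrow>
    (\<forall>h\<in>carrier G. slice_left G \<chi> (DeltaJ G H \<omega> h) = slice_right G \<chi> (DeltaJ G H \<omega> h))"
proof
  assume c: "\<chi> \<in> dual_center G H \<omega>"
  show "\<forall>h\<in>carrier G. slice_left G \<chi> (DeltaJ G H \<omega> h) = slice_right G \<chi> (DeltaJ G H \<omega> h)"
  proof (intro ballI ext)
    fix h y assume h: "h \<in> carrier G"
    show "slice_left G \<chi> (DeltaJ G H \<omega> h) y = slice_right G \<chi> (DeltaJ G H \<omega> h) y"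
    proof (cases "y \<in> carrier G")
      case y: True
      have "delta y \<in> dual_space G" unfolding dual_space_def delta_def using y by auto
      then have "dual_mult G H \<omega> \<chi> (delta y) h = dual_mult G H \<omega> (delta y) \<chi> h"
        using c unfolding dual_center_def by auto
      then show ?thesis
        unfolding dual_mult_eq_slice_left[OF h, where \<psi> = "delta y"]
          dual_mult_eq_slice_right[OF h, where \<psi> = "delta y"]
          sum_mult_delta[OF y] .
    qed (simp add: slice_right_eq slice_left_def)
  qed
next
  assume eq: "\<forall>h\<in>carrier G. slice_left G \<chi> (DeltaJ G H \<omega> h) = slice_right G \<chi> (DeltaJ G H \<omega> h)"
  have "dual_mult G H \<omega> \<chi> \<psi> h = dual_mult G H \<omega> \<psi> \<chi> h" for \<psi> h
  proof (cases "h \<in> carrier G")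
    case True
    then show ?thesis using eq
      unfolding dual_mult_eq_slice_left[OF True, where \<chi> = \<chi> and \<psi> = \<psi>]
        dual_mult_eq_slice_right[OF True, where \<chi> = \<chi> and \<psi> = \<psi>] by simp
  qed (simp add: dual_mult_def)
  then have "dual_mult G H \<omega> \<chi> \<psi> = dual_mult G H \<omega> \<psi> \<chi>" for \<psi> by auto
  then show "\<chi> \<in> dual_center G H \<omega>" unfolding dual_center_def using assms by simp
qed

end

section \<open>The dual of \<open>H\<close>, its idempotents and the twist\<close>

locale abelian_twist = finite_group G for G :: "('a, 'b) monoid_scheme" (structure) +
  fixes H :: "'a set" and \<omega> :: "('a \<Rightarrow> 'k::field_char_0) \<Rightarrow> ('a \<Rightarrow> 'k) \<Rightarrow> 'k"
  assumes alg_closed: "alg_closed TYPE('k)" and subgroup_H: "subgroup H G"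
    and H_comm: "\<forall>x\<in>H. \<forall>y\<in>H. x \<otimes> y = y \<otimes> x" and cocycle: "is_2cocycle G H \<omega>"
begin

lemma comm_group_H: "comm_group (G\<lparr>carrier := H\<rparr>)"
  using group.group_comm_groupI[OF subgroup_imp_group[OF subgroup_H]] H_comm by simp

interpretation H: comm_group "G\<lparr>carrier := H\<rparr>" by (rule comm_group_H)

abbreviation C :: "('a \<Rightarrow> 'k) set" where "C \<equiv> chars G H"

abbreviation e :: "('a \<Rightarrow> 'k) \<Rightarrow> 'a \<Rightarrow> 'k" where "e \<equiv> idem G H"

abbreviation card_H :: 'k where "card_H \<equiv> of_nat (card H)"

lemma H_carrier: "H \<subseteq> carrier G"
  using subgroup.subset[OF subgroup_H] .

lemma in_H_carrier: "x \<in> H \<Longrightarrow> x \<in> carrier G"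
  using H_carrier by auto

lemma finite_H: "finite H"
  using finite_carrier H_carrier finite_subset by blast

lemma H_closed:
  "\<one> \<in> H" "x \<in> H \<Longrightarrow> inv x \<in> H" "x \<in> H \<Longrightarrow> y \<in> H \<Longrightarrow> x \<otimes> y \<in> H"
  using subgroup.one_closed[OF subgroup_H] subgroupE(3,4)[OF subgroup_H] by auto

lemma card_H_nonzero: "card_H \<noteq> 0"
  using finite_H H_closed(1) by (auto simp: card_gt_0_iff)

lemma sum_carrier_eq_sum_H:
  "(\<And>a. a \<in> carrier G \<Longrightarrow> a \<notin> H \<Longrightarrow> f a = 0) \<Longrightarrow> (\<Sum>a\<in>carrier G. f a) = (\<Sum>a\<in>H. f a)"
  using sum.mono_neutral_right[OF finite_carrier H_carrier, of f] by auto

lemma trivial_char_H: "trivial_char (G\<lparr>carrier := H\<rparr>) = char_one H"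
  unfolding trivial_char_def char_one_def by simp

lemma finite_chars: "finite C"
  unfolding chars_eq_characters using H.finite_characters finite_H by simp

lemma charsD:
  assumes "\<alpha> \<in> C"
  shows chars_mult: "x \<in> H \<Longrightarrow> y \<in> H \<Longrightarrow> \<alpha> (x \<otimes> y) = \<alpha> x * \<alpha> y"
    and chars_one: "\<alpha> \<one> = 1"
    and chars_outside: "x \<notin> H \<Longrightarrow> \<alpha> x = 0"
    and chars_nonzero: "x \<in> H \<Longrightarrow> \<alpha> x \<noteq> 0"
    and chars_inv: "x \<in> H \<Longrightarrow> \<alpha> (inv x) = inverse (\<alpha> x)"
proof -
  have \<alpha>: "\<alpha> \<in> characters (G\<lparr>carrier := H\<rparr>)" using assms unfolding chars_eq_characters .
  show "x \<in> H \<Longrightarrow> y \<in> H \<Longrightarrow> \<alpha> (x \<otimes> y) = \<alpha> x * \<alpha> y" "\<alpha> \<one> = 1" "x \<notin> H \<Longrightarrow> \<alpha> x = 0"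
    using characterD[OF \<alpha>] by simp_all
  show "x \<in> H \<Longrightarrow> \<alpha> x \<noteq> 0" using H.character_nonzero[OF \<alpha>] by simp
  show "x \<in> H \<Longrightarrow> \<alpha> (inv x) = inverse (\<alpha> x)"
    using H.character_inv[OF \<alpha>, of x] m_inv_consistent[OF subgroup_H] by simp
qed

lemma char_mult_eq: "\<alpha> \<in> C \<Longrightarrow> \<beta> \<in> C \<Longrightarrow> char_mult H \<alpha> \<beta> = (\<lambda>x. \<alpha> x * \<beta> x)"
  unfolding char_mult_def using chars_outside by auto

lemma char_mult_in_chars:
  assumes "\<alpha> \<in> C" "\<beta> \<in> C"
  shows "char_mult H \<alpha> \<beta> \<in> C"
  using H.characters_mult_closed[of \<alpha> \<beta>] assms
  unfolding char_mult_eq[OF assms] chars_eq_characters by simp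

lemma char_one_in_chars: "char_one H \<in> C"
  using H.trivial_char_in_characters unfolding trivial_char_H chars_eq_characters .

lemma char_mult_commute: "\<alpha> \<in> C \<Longrightarrow> \<beta> \<in> C \<Longrightarrow> char_mult H \<alpha> \<beta> = char_mult H \<beta> \<alpha>"
  by (simp add: char_mult_eq mult.commute)

lemma char_mult_one: "\<gamma> \<in> C \<Longrightarrow> char_mult H (char_one H) \<gamma> = \<gamma>" "\<gamma> \<in> C \<Longrightarrow> char_mult H \<gamma> (char_one H) = \<gamma>"
  unfolding char_mult_def char_one_def using chars_outside by auto

lemma character_subgroup_chars: "character_subgroup (G\<lparr>carrier := H\<rparr>) C"
  unfolding character_subgroup_def
  using finite_chars char_one_in_chars char_mult_in_chars char_mult_eq
  by (auto simp: trivial_char_H chars_eq_characters[symmetric])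

lemma annihilator_chars: "annihilator (G\<lparr>carrier := H\<rparr>) C = {\<one>}"
proof -
  have "\<exists>\<alpha>\<in>C. \<alpha> x \<noteq> 1" if "x \<in> H" "x \<noteq> \<one>" for x
    using H.characters_separate_points[OF _ alg_closed, of x] finite_H that
    unfolding chars_eq_characters by auto
  then show ?thesis unfolding annihilator_def using chars_one H_closed(1) by auto
qed

lemma card_chars: "card C = card H"
  using H.card_character_subgroup_mult_card_annihilator[OF _ character_subgroup_chars] finite_H
  by (simp add: annihilator_chars order_def)

lemma sum_chars: "x \<in> H \<Longrightarrow> (\<Sum>\<alpha>\<in>C. \<alpha> x) = (if x = \<one> then card_H else 0)"
  using H.sum_character_subgroup[OF character_subgroup_chars, of x] annihilator_chars card_chars
  by auto

lemma sum_H_char: "\<alpha> \<in> C \<Longrightarrow> (\<Sum>x\<in>H. \<alpha> x) = (if \<alpha> = char_one H then card_H else 0)"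
  using H.sum_character[of \<alpha>] by (simp add: chars_eq_characters trivial_char_H order_def)

lemma chars_orthogonal:
  assumes \<alpha>: "\<alpha> \<in> C" and \<gamma>: "\<gamma> \<in> C"
  shows "(\<Sum>a\<in>H. \<alpha> (inv a) * \<gamma> a) = (if \<alpha> = \<gamma> then card_H else 0)"
proof -
  define \<delta> where "\<delta> = (\<lambda>x. if x \<in> H then \<alpha> (inv x) * \<gamma> x else 0)"
  have "\<delta> \<in> C"
    unfolding \<delta>_def chars_def using \<alpha> \<gamma> H_closed H_comm
    by (auto simp: chars_mult chars_one inv_mult_group chars_nonzero H_carrier[THEN subsetD])
  then have "(\<Sum>a\<in>H. \<alpha> (inv a) * \<gamma> a) = (if \<delta> = char_one H then card_H else 0)"
    using sum_H_char[of \<delta>] unfolding \<delta>_def by simp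
  moreover have "\<delta> = char_one H \<longleftrightarrow> \<alpha> = \<gamma>"
  proof
    assume "\<delta> = char_one H"
    then have "\<alpha> (inv x) * \<gamma> x = 1" if "x \<in> H" for x
      using fun_cong[of \<delta> _ x] that unfolding \<delta>_def char_one_def by auto
    then have "\<gamma> x = \<alpha> x" if "x \<in> H" for x
      using that chars_inv[OF \<alpha>] chars_nonzero[OF \<alpha>] by (fastforce simp: field_simps)
    then show "\<alpha> = \<gamma>" using chars_outside[OF \<alpha>] chars_outside[OF \<gamma>] by (metis ext)
  next
    assume "\<alpha> = \<gamma>"
    then show "\<delta> = char_one H"
      unfolding \<delta>_def char_one_def using chars_inv[OF \<alpha>] chars_nonzero[OF \<alpha>] by auto
  qed
  ultimately show ?thesis by simp
qed

lemma idem_outside: "x \<notin> H \<Longrightarrow> e \<alpha> x = 0"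
  unfolding idem_def by simp

lemma idem_inside: "x \<in> H \<Longrightarrow> e \<alpha> x = \<alpha> (inv x) / card_H"
  unfolding idem_def by simp

lemma sum_idem_eq_delta_one: "(\<Sum>\<alpha>\<in>C. e \<alpha> x) = delta \<one> x"
proof (cases "x \<in> H")
  case True
  then have "(\<Sum>\<alpha>\<in>C. e \<alpha> x) = (if inv x = \<one> then card_H else 0) / card_H"
    using sum_chars[of "inv x"] H_closed(2) by (simp add: idem_inside flip: sum_divide_distrib)
  then show ?thesis using card_H_nonzero True H_carrier by (auto simp: delta_def)
next
  case False
  then show ?thesis using H_closed(1) by (auto simp: idem_outside delta_def)
qed

lemma conv_idem: "\<alpha> \<in> C \<Longrightarrow> \<gamma> \<in> C \<Longrightarrow> conv G (e \<alpha>) (e \<gamma>) = (if \<alpha> = \<gamma> then e \<alpha> else (\<lambda>_. 0))"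
proof
  fix x assume \<alpha>: "\<alpha> \<in> C" and \<gamma>: "\<gamma> \<in> C"
  show "conv G (e \<alpha>) (e \<gamma>) x = (if \<alpha> = \<gamma> then e \<alpha> else (\<lambda>_. 0)) x"
  proof (cases "x \<in> carrier G")
    case False
    then have "x \<notin> H" using H_carrier by auto
    then show ?thesis unfolding conv_def using False by (simp add: idem_outside)
  next
    case xG: True
    have "(\<Sum>a\<in>carrier G. e \<alpha> a * e \<gamma> (inv a \<otimes> x)) = (\<Sum>a\<in>H. e \<alpha> a * e \<gamma> (inv a \<otimes> x))"
      by (rule sum_carrier_eq_sum_H) (simp add: idem_outside)
    also have "\<dots> = (if x \<in> H then \<gamma> (inv x) / (card_H * card_H) * (\<Sum>a\<in>H. \<alpha> (inv a) * \<gamma> a) else 0)"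
    proof (cases "x \<in> H")
      case x: True
      have "e \<alpha> a * e \<gamma> (inv a \<otimes> x) = \<gamma> (inv x) / (card_H * card_H) * (\<alpha> (inv a) * \<gamma> a)"
        if a: "a \<in> H" for a
      proof -
        have "a \<in> carrier G" using a H_carrier by auto
        then have "inv (inv a \<otimes> x) = inv x \<otimes> a" using xG by (simp add: inv_mult_group)
        then show ?thesis
          using a x H_closed chars_mult[OF \<gamma>, of "inv x" a] by (simp add: idem_inside field_simps)
      qed
      then show ?thesis using x by (simp add: sum_distrib_left)
    next
      case x: False
      have "inv a \<otimes> x \<notin> H" if a: "a \<in> H" for a
      proof
        assume "inv a \<otimes> x \<in> H"
        then have "a \<otimes> (inv a \<otimes> x) \<in> H" using a H_closed(3) by blast
        moreover have "a \<in> carrier G" using a H_carrier by auto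
        ultimately show False using x xG by (simp add: m_assoc[symmetric])
      qed
      then show ?thesis using x by (simp add: idem_outside)
    qed
    also have "\<dots> = (if \<alpha> = \<gamma> then e \<alpha> x else 0)"
      unfolding chars_orthogonal[OF \<alpha> \<gamma>] using card_H_nonzero by (simp add: idem_inside idem_outside)
    finally show ?thesis unfolding conv_def using xG by simp
  qed
qed

definition idem_comb :: "(('a \<Rightarrow> 'k) \<Rightarrow> 'k) \<Rightarrow> ('a \<Rightarrow> 'k)" where
  "idem_comb f = (\<lambda>x. \<Sum>\<alpha>\<in>C. f \<alpha> * e \<alpha> x)"

lemma idem_comb_outside: "x \<notin> H \<Longrightarrow> idem_comb f x = 0"
  unfolding idem_comb_def by (simp add: idem_outside)

lemma idem_comb_cong: "(\<And>\<alpha>. \<alpha> \<in> C \<Longrightarrow> f \<alpha> = g \<alpha>) \<Longrightarrow> idem_comb f = idem_comb g"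
  unfolding idem_comb_def by (intro ext sum.cong) auto

lemma idem_comb_one: "idem_comb (\<lambda>_. 1) = delta \<one>"
  unfolding idem_comb_def by (simp add: sum_idem_eq_delta_one)

lemma conv_idem_comb: "conv G (idem_comb f) (idem_comb g) = idem_comb (\<lambda>\<alpha>. f \<alpha> * g \<alpha>)"
proof
  fix x
  have "conv G (idem_comb f) (idem_comb g) x
      = (\<Sum>\<alpha>\<in>C. f \<alpha> * (\<Sum>\<beta>\<in>C. g \<beta> * conv G (e \<alpha>) (e \<beta>) x))"
    unfolding idem_comb_def conv_sum_left conv_sum_right ..
  also have "\<dots> = (\<Sum>\<alpha>\<in>C. f \<alpha> * (\<Sum>\<beta>\<in>C. if \<alpha> = \<beta> then g \<beta> * e \<alpha> x else 0))"
    by (intro sum.cong refl arg_cong2[where f = "(*)"]) (auto simp: conv_idem)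
  finally show "conv G (idem_comb f) (idem_comb g) x = idem_comb (\<lambda>\<alpha>. f \<alpha> * g \<alpha>) x"
    using finite_chars by (simp add: idem_comb_def mult.assoc)
qed

lemma sum_idem: "\<alpha> \<in> C \<Longrightarrow> (\<Sum>x\<in>carrier G. e \<alpha> x) = (if \<alpha> = char_one H then 1 else 0)"
  using chars_orthogonal[OF _ char_one_in_chars, of \<alpha>] card_H_nonzero
  by (simp add: sum_carrier_eq_sum_H idem_outside idem_inside char_one_def flip: sum_divide_distrib)

lemma sum_idem_comb: "(\<Sum>x\<in>carrier G. idem_comb f x) = f (char_one H)"
proof -
  have "(\<Sum>x\<in>carrier G. idem_comb f x) = (\<Sum>\<alpha>\<in>C. f \<alpha> * (\<Sum>x\<in>carrier G. e \<alpha> x))"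
    unfolding idem_comb_def sum_distrib_left by (rule sum.swap)
  also have "\<dots> = (\<Sum>\<alpha>\<in>C. if \<alpha> = char_one H then f \<alpha> else 0)"
    by (intro sum.cong) (auto simp: sum_idem)
  finally show ?thesis using finite_chars char_one_in_chars by simp
qed

definition char_res :: "('a \<Rightarrow> 'k) \<Rightarrow> ('a \<Rightarrow> 'k)" where
  "char_res \<chi> = (\<lambda>x. if x \<in> H then \<chi> x else 0)"

lemma char_res_in_chars: "\<chi> \<in> characters G \<Longrightarrow> char_res \<chi> \<in> C"
  unfolding char_res_def chars_def using characterD[of \<chi> G] H_closed in_H_carrier by auto

lemma sum_idem_mult_character:
  assumes \<chi>: "\<chi> \<in> characters G" and \<alpha>: "\<alpha> \<in> C"
  shows "(\<Sum>x\<in>carrier G. e \<alpha> x * \<chi> x) = (if \<alpha> = char_res \<chi> then 1 else 0)"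
proof -
  have "(\<Sum>x\<in>carrier G. e \<alpha> x * \<chi> x) = (\<Sum>x\<in>H. \<alpha> (inv x) * char_res \<chi> x) / card_H"
    by (simp add: sum_carrier_eq_sum_H idem_outside idem_inside char_res_def sum_divide_distrib)
  then show ?thesis using chars_orthogonal[OF \<alpha> char_res_in_chars[OF \<chi>]] card_H_nonzero by simp
qed

lemma omega_nonzero: "\<alpha> \<in> C \<Longrightarrow> \<beta> \<in> C \<Longrightarrow> \<omega> \<alpha> \<beta> \<noteq> 0"
  using cocycle unfolding is_2cocycle_def by blast

lemma omega_cocycle: "\<alpha> \<in> C \<Longrightarrow> \<beta> \<in> C \<Longrightarrow> \<gamma> \<in> C \<Longrightarrow>
   \<omega> \<alpha> \<beta> * \<omega> (char_mult H \<alpha> \<beta>) \<gamma> = \<omega> \<beta> \<gamma> * \<omega> \<alpha> (char_mult H \<beta> \<gamma>)"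
  using cocycle unfolding is_2cocycle_def by blast

lemma twist_J_eq_sum_tens:
  fixes a :: "('a \<Rightarrow> 'k) \<Rightarrow> ('a \<Rightarrow> 'k) \<Rightarrow> 'k"
  shows "twist_J G H a = (\<lambda>z. \<Sum>p\<in>C \<times> C. a (fst p) (snd p) * tens (e (fst p)) (e (snd p)) z)"
  unfolding twist_J_def tens_def
  by (auto simp: sum.cartesian_product mult.assoc case_prod_unfold)

lemma twist_J_cong:
  fixes a b :: "('a \<Rightarrow> 'k) \<Rightarrow> ('a \<Rightarrow> 'k) \<Rightarrow> 'k"
  shows "(\<And>\<alpha> \<beta>. \<alpha> \<in> C \<Longrightarrow> \<beta> \<in> C \<Longrightarrow> a \<alpha> \<beta> = b \<alpha> \<beta>) \<Longrightarrow> twist_J G H a = twist_J G H b"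
  unfolding twist_J_def by (intro ext) (auto intro!: sum.cong)

lemma tmult_twist_J:
  fixes a b :: "('a \<Rightarrow> 'k) \<Rightarrow> ('a \<Rightarrow> 'k) \<Rightarrow> 'k"
  shows "tmult G (twist_J G H a) (twist_J G H b) = twist_J G H (\<lambda>\<alpha> \<beta>. a \<alpha> \<beta> * b \<alpha> \<beta>)"
proof
  fix z
  have idem_tens: "tmult G (tens (e (fst p)) (e (snd p))) (tens (e (fst q)) (e (snd q)))
      = (if p = q then tens (e (fst p)) (e (snd p)) else (\<lambda>_. 0))" if "p \<in> C \<times> C" "q \<in> C \<times> C" for p q :: "('a \<Rightarrow> 'k) \<times> ('a \<Rightarrow> 'k)"
    using that unfolding tmult_tens by (cases p, cases q) (auto simp: conv_idem tens_def)
  have "tmult G (twist_J G H a) (twist_J G H b) z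
     = (\<Sum>p\<in>C \<times> C. a (fst p) (snd p) * (\<Sum>q\<in>C \<times> C. b (fst q) (snd q) *
          tmult G (tens (e (fst p)) (e (snd p))) (tens (e (fst q)) (e (snd q))) z))"
    unfolding twist_J_eq_sum_tens[of a] twist_J_eq_sum_tens[of b] tmult_sum_left tmult_sum_right ..
  also have "\<dots> = (\<Sum>p\<in>C \<times> C. a (fst p) (snd p) * (\<Sum>q\<in>C \<times> C.
          if p = q then b (fst p) (snd p) * tens (e (fst p)) (e (snd p)) z else 0))"
    by (intro sum.cong refl arg_cong2[where f = "(*)"]) (auto simp: idem_tens)
  finally show "tmult G (twist_J G H a) (twist_J G H b) z = twist_J G H (\<lambda>\<alpha> \<beta>. a \<alpha> \<beta> * b \<alpha> \<beta>) z"
    using finite_chars by (simp add: twist_J_eq_sum_tens[of "\<lambda>\<alpha> \<beta>. a \<alpha> \<beta> * b \<alpha> \<beta>"] mult.assoc)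
qed

lemma twist_J_one: "twist_J G H (\<lambda>_ _. 1 :: 'k) = tunit G"
proof
  fix z :: "'a \<times> 'a"
  obtain x y where z: "z = (x, y)" by fastforce
  have "twist_J G H (\<lambda>_ _. 1 :: 'k) (x, y) = (\<Sum>\<alpha>\<in>C. e \<alpha> x) * (\<Sum>\<beta>\<in>C. e \<beta> y)"
    unfolding twist_J_def by (simp add: sum_product)
  also have "\<dots> = tunit G (x, y)"
    unfolding sum_idem_eq_delta_one tunit_def delta_def by simp
  finally show "twist_J G H (\<lambda>_ _. 1 :: 'k) z = tunit G z" using z by simp
qed

lemma tsupp_twist_J: "tsupp G (twist_J G H (a :: ('a \<Rightarrow> 'k) \<Rightarrow> ('a \<Rightarrow> 'k) \<Rightarrow> 'k))"
proof -
  have "e \<alpha> x = 0" if "x \<notin> carrier G" for \<alpha> x using that in_H_carrier idem_outside by blast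
  then show ?thesis unfolding tsupp_def twist_J_def by auto
qed

lemma twist_Jinv_eq: "twist_Jinv G H \<omega> = twist_J G H (\<lambda>\<alpha> \<beta>. inverse (\<omega> \<alpha> \<beta>))"
  unfolding twist_Jinv_def
proof (rule the_equality)
  let ?X = "twist_J G H (\<lambda>\<alpha> \<beta>. inverse (\<omega> \<alpha> \<beta>))"
  have right: "tmult G (twist_J G H \<omega>) ?X = tunit G" and "tmult G ?X (twist_J G H \<omega>) = tunit G"
    unfolding tmult_twist_J twist_J_one[symmetric] using omega_nonzero by (auto intro: twist_J_cong)
  then show "tsupp G ?X \<and> tmult G (twist_J G H \<omega>) ?X = tunit G \<and> tmult G ?X (twist_J G H \<omega>) = tunit G"
    using tsupp_twist_J by simp
  fix X assume X: "tsupp G X \<and> tmult G (twist_J G H \<omega>) X = tunit G \<and> tmult G X (twist_J G H \<omega>) = tunit G"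
  have "X = tmult G X (tmult G (twist_J G H \<omega>) ?X)" using tmult_tunit_right[of X] X right by simp
  also have "\<dots> = ?X" using X tmult_tunit_left[OF tsupp_twist_J] by (simp flip: tmult_assoc)
  finally show "X = ?X" .
qed

end

context abelian_twist begin

lemma slice_left_twist_J:
  fixes a :: "('a \<Rightarrow> 'k) \<Rightarrow> ('a \<Rightarrow> 'k) \<Rightarrow> 'k"
  assumes \<chi>: "\<chi> \<in> characters G"
  shows "slice_left G \<chi> (twist_J G H a) = idem_comb (a (char_res \<chi>))"
proof
  fix y show "slice_left G \<chi> (twist_J G H a) y = idem_comb (a (char_res \<chi>)) y"
  proof (cases "y \<in> carrier G")
    case True
    have "(\<Sum>x\<in>carrier G. twist_J G H a (x, y) * \<chi> x)
       = (\<Sum>x\<in>carrier G. \<Sum>\<alpha>\<in>C. \<Sum>\<beta>\<in>C. e \<beta> y * (a \<alpha> \<beta> * (e \<alpha> x * \<chi> x)))"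
      unfolding twist_J_def by (simp add: sum_distrib_right algebra_simps sum_distrib_left)
    also have "\<dots> = (\<Sum>\<alpha>\<in>C. \<Sum>x\<in>carrier G. \<Sum>\<beta>\<in>C. e \<beta> y * (a \<alpha> \<beta> * (e \<alpha> x * \<chi> x)))"
      by (rule sum.swap)
    also have "\<dots> = (\<Sum>\<alpha>\<in>C. \<Sum>\<beta>\<in>C. e \<beta> y * (a \<alpha> \<beta> * (\<Sum>x\<in>carrier G. e \<alpha> x * \<chi> x)))"
      by (intro sum.cong refl, subst sum.swap) (simp add: sum_distrib_left)
    also have "\<dots> = (\<Sum>\<alpha>\<in>C. if \<alpha> = char_res \<chi> then (\<Sum>\<beta>\<in>C. e \<beta> y * a (char_res \<chi>) \<beta>) else 0)"
      by (intro sum.cong refl) (auto simp: sum_idem_mult_character[OF \<chi>])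
    finally show ?thesis
      unfolding slice_left_def idem_comb_def using True finite_chars char_res_in_chars[OF \<chi>]
      by (simp add: mult.commute)
  next
    case False
    then show ?thesis unfolding slice_left_def using idem_comb_outside in_H_carrier by auto
  qed
qed

lemma twist_J_swap:
  fixes a :: "('a \<Rightarrow> 'k) \<Rightarrow> ('a \<Rightarrow> 'k) \<Rightarrow> 'k"
  shows "twist_J G H a \<circ> prod.swap = twist_J G H (\<lambda>\<alpha> \<beta>. a \<beta> \<alpha>)"
proof
  fix p :: "'a \<times> 'a"
  obtain x y where p: "p = (x, y)" by fastforce
  have "(\<Sum>\<alpha>\<in>C. \<Sum>\<beta>\<in>C. a \<alpha> \<beta> * e \<alpha> y * e \<beta> x) = (\<Sum>\<beta>\<in>C. \<Sum>\<alpha>\<in>C. a \<alpha> \<beta> * e \<beta> x * e \<alpha> y)"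
    by (subst sum.swap) (simp add: mult_ac)
  then show "(twist_J G H a \<circ> prod.swap) p = twist_J G H (\<lambda>\<alpha> \<beta>. a \<beta> \<alpha>) p"
    unfolding twist_J_def p by simp
qed

lemma slice_right_twist_J:
  fixes a :: "('a \<Rightarrow> 'k) \<Rightarrow> ('a \<Rightarrow> 'k) \<Rightarrow> 'k"
  assumes \<chi>: "\<chi> \<in> characters G"
  shows "slice_right G \<chi> (twist_J G H a) = idem_comb (\<lambda>\<alpha>. a \<alpha> (char_res \<chi>))"
  unfolding slice_right_def twist_J_swap slice_left_twist_J[OF \<chi>] ..

lemma DeltaJ_eq: "DeltaJ G H \<omega> h = tmult G (tmult G (twist_Jinv G H \<omega>) (delta (h, h))) (twist_J G H \<omega>)"
  unfolding DeltaJ_def delta_def ..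

lemma slice_left_DeltaJ:
  assumes \<chi>: "\<chi> \<in> characters G" and h: "h \<in> carrier G"
  shows "slice_left G \<chi> (DeltaJ G H \<omega> h)
    = conv G (conv G (idem_comb (\<lambda>\<beta>. inverse (\<omega> (char_res \<chi>) \<beta>))) (\<lambda>y. \<chi> h * delta h y))
        (idem_comb (\<omega> (char_res \<chi>)))"
  unfolding DeltaJ_eq slice_left_tmult[OF \<chi>] twist_Jinv_eq slice_left_twist_J[OF \<chi>]
    slice_left_delta_diag[OF h] ..

lemma slice_right_DeltaJ:
  assumes \<chi>: "\<chi> \<in> characters G" and h: "h \<in> carrier G"
  shows "slice_right G \<chi> (DeltaJ G H \<omega> h)
    = conv G (conv G (idem_comb (\<lambda>\<alpha>. inverse (\<omega> \<alpha> (char_res \<chi>)))) (\<lambda>y. \<chi> h * delta h y))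
        (idem_comb (\<lambda>\<alpha>. \<omega> \<alpha> (char_res \<chi>)))"
  unfolding DeltaJ_eq slice_right_tmult[OF \<chi>] twist_Jinv_eq slice_right_twist_J[OF \<chi>]
    slice_right_delta_diag[OF h] ..

end

section \<open>Central group-likes of \<open>A\<^sup>*\<close>\<close>

context abelian_twist begin

lemma omega_char_one_left: "\<gamma> \<in> C \<Longrightarrow> \<omega> (char_one H) \<gamma> = \<omega> (char_one H) (char_one H)"
  using omega_cocycle[OF char_one_in_chars char_one_in_chars, of \<gamma>] char_mult_one(1)[OF char_one_in_chars]
    char_mult_one(1)[of \<gamma>] omega_nonzero[OF char_one_in_chars, of \<gamma>] by simp

lemma omega_char_one_right: "\<gamma> \<in> C \<Longrightarrow> \<omega> \<gamma> (char_one H) = \<omega> (char_one H) (char_one H)"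
  using omega_cocycle[of \<gamma>, OF _ char_one_in_chars char_one_in_chars] char_mult_one(2)[OF char_one_in_chars]
    char_mult_one(2)[of \<gamma>] omega_nonzero[OF _ char_one_in_chars, of \<gamma>] by simp

lemma omega_commutator_mult:
  assumes c: "c \<in> C" and a: "\<alpha> \<in> C" and b: "\<beta> \<in> C"
  shows "\<omega> (char_mult H \<alpha> \<beta>) c * inverse (\<omega> c (char_mult H \<alpha> \<beta>))
       = (\<omega> \<alpha> c * inverse (\<omega> c \<alpha>)) * (\<omega> \<beta> c * inverse (\<omega> c \<beta>))"
proof -
  have ab: "char_mult H \<alpha> \<beta> \<in> C" and ac: "char_mult H \<alpha> c \<in> C"
    using char_mult_in_chars a b c by auto
  have e1: "\<omega> \<alpha> \<beta> * \<omega> (char_mult H \<alpha> \<beta>) c = \<omega> \<beta> c * \<omega> \<alpha> (char_mult H c \<beta>)"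
    using omega_cocycle[OF a b c] char_mult_commute[OF b c] by simp
  have e2: "\<omega> c \<alpha> * \<omega> (char_mult H \<alpha> c) \<beta> = \<omega> \<alpha> \<beta> * \<omega> c (char_mult H \<alpha> \<beta>)"
    using omega_cocycle[OF c a b] char_mult_commute[OF c a] by simp
  have e3: "\<omega> \<alpha> c * \<omega> (char_mult H \<alpha> c) \<beta> = \<omega> c \<beta> * \<omega> \<alpha> (char_mult H c \<beta>)"
    using omega_cocycle[OF a c b] .
  have nz: "\<omega> \<alpha> \<beta> \<noteq> 0" "\<omega> c \<alpha> \<noteq> 0" "\<omega> c \<beta> \<noteq> 0" "\<omega> (char_mult H \<alpha> c) \<beta> \<noteq> 0"
    "\<omega> c (char_mult H \<alpha> \<beta>) \<noteq> 0" "\<omega> \<alpha> c \<noteq> 0" "\<omega> \<beta> c \<noteq> 0"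
    using omega_nonzero a b c ab ac by auto
  define A where "A = \<omega> (char_mult H \<alpha> \<beta>) c"
  define B where "B = \<omega> c (char_mult H \<alpha> \<beta>)"
  define X where "X = \<omega> \<alpha> (char_mult H c \<beta>)"
  define Y where "Y = \<omega> (char_mult H \<alpha> c) \<beta>"
  have A: "A = \<omega> \<beta> c * X / \<omega> \<alpha> \<beta>" using e1 nz unfolding A_def X_def by (simp add: field_simps)
  have B: "B = \<omega> c \<alpha> * Y / \<omega> \<alpha> \<beta>" using e2 nz unfolding B_def Y_def by (simp add: field_simps)
  have X: "X = \<omega> \<alpha> c * Y / \<omega> c \<beta>" using e3 nz unfolding X_def Y_def by (simp add: field_simps)
  have "A * inverse B = (\<omega> \<alpha> c * inverse (\<omega> c \<alpha>)) * (\<omega> \<beta> c * inverse (\<omega> c \<beta>))"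
    unfolding A B X using nz unfolding Y_def by (simp add: field_simps)
  then show ?thesis unfolding A_def B_def .
qed

lemma multiplicative_on_chars_eq_one:
  assumes mult: "\<forall>\<alpha>\<in>C. \<forall>\<beta>\<in>C. \<mu> (char_mult H \<alpha> \<beta>) = \<mu> \<alpha> * \<mu> \<beta>"
    and nonzero: "(\<Sum>\<alpha>\<in>C. \<mu> \<alpha>) \<noteq> (0::'k)"
    and \<beta>: "\<beta> \<in> C"
  shows "\<mu> \<beta> = 1"
proof -
  have inj: "inj_on (char_mult H \<beta>) C"
  proof (rule inj_onI, rule ext)
    fix \<alpha> \<alpha>' x assume \<alpha>: "\<alpha> \<in> C" "\<alpha>' \<in> C" and eq: "char_mult H \<beta> \<alpha> = char_mult H \<beta> \<alpha>'"
    show "\<alpha> x = \<alpha>' x"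
      using fun_cong[OF eq, of x] chars_nonzero[OF \<beta>, of x] chars_outside[OF \<alpha>(1)] chars_outside[OF \<alpha>(2)]
      unfolding char_mult_def by (cases "x \<in> H") auto
  qed
  have "char_mult H \<beta> ` C = C"
    using char_mult_in_chars[OF \<beta>] by (intro endo_inj_surj[OF finite_chars _ inj]) auto
  then have "(\<Sum>\<alpha>\<in>C. \<mu> \<alpha>) = (\<Sum>\<alpha>\<in>C. \<mu> (char_mult H \<beta> \<alpha>))"
    using sum.reindex[OF inj, of \<mu>] by simp
  also have "\<dots> = \<mu> \<beta> * (\<Sum>\<alpha>\<in>C. \<mu> \<alpha>)"
    using mult \<beta> by (simp add: sum_distrib_left)
  finally have "(1 - \<mu> \<beta>) * (\<Sum>\<alpha>\<in>C. \<mu> \<alpha>) = 0" by (simp add: algebra_simps)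
  then show ?thesis using nonzero by simp
qed

lemma idem_comb_eval: "x\<^sub>0 \<in> H \<Longrightarrow> idem_comb (\<lambda>\<alpha>. \<alpha> x\<^sub>0) = delta x\<^sub>0"
proof
  fix y assume x\<^sub>0: "x\<^sub>0 \<in> H"
  show "idem_comb (\<lambda>\<alpha>. \<alpha> x\<^sub>0) y = delta x\<^sub>0 y"
  proof (cases "y \<in> H")
    case y: True
    then have "x\<^sub>0 \<otimes> inv y \<in> H" using x\<^sub>0 H_closed by blast
    moreover have "x\<^sub>0 \<otimes> inv y = \<one> \<longleftrightarrow> y = x\<^sub>0"
    proof
      assume "x\<^sub>0 \<otimes> inv y = \<one>"
      then have "inv (inv y) = x\<^sub>0" using x\<^sub>0 y in_H_carrier by (intro inv_equality) auto
      then show "y = x\<^sub>0" using y in_H_carrier by simp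
    qed (use y in_H_carrier in simp)
    moreover have "idem_comb (\<lambda>\<alpha>. \<alpha> x\<^sub>0) y = (\<Sum>\<alpha>\<in>C. \<alpha> (x\<^sub>0 \<otimes> inv y)) / card_H"
      unfolding idem_comb_def using x\<^sub>0 y H_closed
      by (simp add: idem_inside chars_mult sum_divide_distrib)
    ultimately show ?thesis using sum_chars card_H_nonzero by (simp add: delta_def)
  next
    case False
    then show ?thesis using x\<^sub>0 by (auto simp: idem_comb_outside delta_def)
  qed
qed

text \<open>Fourier inversion for \<open>\<widehat>H\<close>: the point \<open>x\<^sub>0\<close> is any point where \<open>idem_comb \<kappa>\<close> does not vanish.\<close>
lemma multiplicative_on_chars_is_eval:
  assumes mult: "\<forall>\<alpha>\<in>C. \<forall>\<beta>\<in>C. \<kappa> (char_mult H \<alpha> \<beta>) = \<kappa> \<alpha> * \<kappa> \<beta>"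
    and one: "\<kappa> (char_one H) = 1"
  obtains x\<^sub>0 where "x\<^sub>0 \<in> H" "\<forall>\<alpha>\<in>C. \<kappa> \<alpha> = \<alpha> x\<^sub>0"
proof -
  have "(\<Sum>x\<in>carrier G. idem_comb \<kappa> x) \<noteq> 0" using sum_idem_comb one by simp
  then obtain x\<^sub>0 where "x\<^sub>0 \<in> carrier G" "idem_comb \<kappa> x\<^sub>0 \<noteq> 0"
    by (meson sum.neutral)
  then have x\<^sub>0: "x\<^sub>0 \<in> H" "inv x\<^sub>0 \<in> H" using idem_comb_outside H_closed by blast+
  define \<mu> where "\<mu> = (\<lambda>\<alpha>. \<kappa> \<alpha> * \<alpha> (inv x\<^sub>0))"
  have "idem_comb \<kappa> x\<^sub>0 = (\<Sum>\<alpha>\<in>C. \<mu> \<alpha>) / card_H"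
    unfolding idem_comb_def \<mu>_def using x\<^sub>0 by (simp add: idem_inside sum_divide_distrib)
  then have nonzero: "(\<Sum>\<alpha>\<in>C. \<mu> \<alpha>) \<noteq> 0" using \<open>idem_comb \<kappa> x\<^sub>0 \<noteq> 0\<close> by auto
  have "\<forall>\<alpha>\<in>C. \<forall>\<beta>\<in>C. \<mu> (char_mult H \<alpha> \<beta>) = \<mu> \<alpha> * \<mu> \<beta>"
    using mult x\<^sub>0 unfolding \<mu>_def by (simp add: char_mult_def)
  then have \<mu>: "\<mu> \<alpha> = 1" if "\<alpha> \<in> C" for \<alpha>
    using multiplicative_on_chars_eq_one nonzero that by blast
  have "\<kappa> \<alpha> = \<alpha> x\<^sub>0" if \<alpha>: "\<alpha> \<in> C" for \<alpha>
  proof -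
    have "\<kappa> \<alpha> * inverse (\<alpha> x\<^sub>0) = 1" using \<mu>[OF \<alpha>] chars_inv[OF \<alpha> x\<^sub>0(1)] unfolding \<mu>_def by simp
    then show ?thesis using chars_nonzero[OF \<alpha> x\<^sub>0(1)] by (simp add: field_simps)
  qed
  then show ?thesis using that x\<^sub>0 by blast
qed

text \<open>With \<open>U = \<Sum> \<omega>(c,\<beta>) e\<^sub>\<beta>\<close> and \<open>V = \<Sum> \<omega>(\<alpha>,c) e\<^sub>\<alpha>\<close>, centrality of \<open>\<chi>\<close> reads
  \<open>U\<^sup>-\<^sup>1 \<delta>\<^sub>h U = V\<^sup>-\<^sup>1 \<delta>\<^sub>h V\<close>, i.e. \<open>V U\<^sup>-\<^sup>1\<close> commutes with every \<open>\<delta>\<^sub>h\<close>.\<close>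
lemma central_character_commutator_invariant:
  assumes \<chi>: "\<chi> \<in> characters G" and central: "\<chi> \<in> dual_center G H \<omega>"
    and h: "h \<in> carrier G" and x: "x \<in> carrier G"
  defines "W \<equiv> idem_comb (\<lambda>\<alpha>. \<omega> \<alpha> (char_res \<chi>) * inverse (\<omega> (char_res \<chi>) \<alpha>))"
  shows "W (x \<otimes> inv h) = W (inv h \<otimes> x)"
proof -
  define c where "c = char_res \<chi>"
  have c: "c \<in> C" unfolding c_def using char_res_in_chars[OF \<chi>] .
  define U where "U = idem_comb (\<omega> c)"
  define U' where "U' = idem_comb (\<lambda>\<beta>. inverse (\<omega> c \<beta>))"
  define V where "V = idem_comb (\<lambda>\<alpha>. \<omega> \<alpha> c)"
  define V' where "V' = idem_comb (\<lambda>\<alpha>. inverse (\<omega> \<alpha> c))"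
  define D where "D = (\<lambda>y. \<chi> h * delta h y)"
  have UU': "conv G U U' = delta \<one>" and VV': "conv G V V' = delta \<one>"
    unfolding U_def U'_def V_def V'_def conv_idem_comb idem_comb_one[symmetric]
    using omega_nonzero c by (auto intro: idem_comb_cong)
  have VU': "conv G V U' = W"
    unfolding V_def U'_def W_def c_def conv_idem_comb ..
  have "supported G D" unfolding supported_def D_def delta_def using h by auto
  have "\<chi> \<in> dual_space G" unfolding dual_space_def using character_outside[OF \<chi>] by blast
  then have "slice_left G \<chi> (DeltaJ G H \<omega> h) = slice_right G \<chi> (DeltaJ G H \<omega> h)"
    using central h dual_center_iff_slices by blast
  then have key: "conv G (conv G U' D) U = conv G (conv G V' D) V"
    using slice_left_DeltaJ[OF \<chi> h] slice_right_DeltaJ[OF \<chi> h]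
    unfolding D_def U_def U'_def V_def V'_def c_def by simp
  have "conv G W D = conv G V (conv G U' (conv G D (conv G U U')))"
    unfolding UU' conv_delta_one_right[OF \<open>supported G D\<close>] VU'[symmetric] conv_assoc ..
  also have "\<dots> = conv G V (conv G (conv G (conv G V' D) V) U')"
    unfolding key[symmetric] by (simp only: conv_assoc)
  also have "\<dots> = conv G (conv G V V') (conv G D (conv G V U'))"
    by (simp only: conv_assoc)
  also have "\<dots> = conv G D W"
    unfolding VV' VU' by (rule conv_delta_one_left[OF supported_conv])
  finally have "conv G W D x = conv G D W x" by simp
  then show ?thesis
    unfolding D_def conv_scale_left conv_scale_right conv_delta_left[OF h] conv_delta_right[OF h]
    using x character_nonzero[OF \<chi> h] by simp
qed

lemma central_character_trivial_on_H:
  assumes \<chi>: "\<chi> \<in> characters G" and central: "\<chi> \<in> dual_center G H \<omega>"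
    and center: "grp_center G = {\<one>}" and nondeg: "nondegenerate G H \<omega>"
  shows "\<forall>x\<in>H. \<chi> x = 1"
proof -
  define c where "c = char_res \<chi>"
  have c: "c \<in> C" unfolding c_def using char_res_in_chars[OF \<chi>] .
  define \<kappa> where "\<kappa> = (\<lambda>\<alpha>. \<omega> \<alpha> c * inverse (\<omega> c \<alpha>))"
  have "\<kappa> (char_one H) = 1"
    unfolding \<kappa>_def using omega_char_one_left[OF c] omega_char_one_right[OF c]
      omega_nonzero[OF char_one_in_chars char_one_in_chars] by simp
  moreover have "\<forall>\<alpha>\<in>C. \<forall>\<beta>\<in>C. \<kappa> (char_mult H \<alpha> \<beta>) = \<kappa> \<alpha> * \<kappa> \<beta>"
    unfolding \<kappa>_def using omega_commutator_mult[OF c] by blast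
  ultimately obtain x\<^sub>0 where x\<^sub>0: "x\<^sub>0 \<in> H" "\<forall>\<alpha>\<in>C. \<kappa> \<alpha> = \<alpha> x\<^sub>0"
    using multiplicative_on_chars_is_eval by blast
  have W: "idem_comb \<kappa> = delta x\<^sub>0"
    using idem_comb_cong[of \<kappa> "\<lambda>\<alpha>. \<alpha> x\<^sub>0"] x\<^sub>0 idem_comb_eval by simp
  have "x\<^sub>0 \<in> grp_center G"
  proof (rule center_if_delta_class_function[OF in_H_carrier[OF x\<^sub>0(1)]])
    fix h x assume "h \<in> carrier G" "x \<in> carrier G"
    then show "(delta x\<^sub>0 (x \<otimes> inv h) :: 'k) = delta x\<^sub>0 (inv h \<otimes> x)"
      using central_character_commutator_invariant[OF \<chi> central] W unfolding \<kappa>_def c_def by simp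
  qed
  then have "x\<^sub>0 = \<one>" using center by simp
  then have "omega_regular G H \<omega> c"
    unfolding omega_regular_def using x\<^sub>0(2) chars_one omega_nonzero c
    by (auto simp: \<kappa>_def field_simps)
  then have "c = char_one H" using nondeg c unfolding nondegenerate_def by blast
  show ?thesis
  proof
    fix x assume "x \<in> H"
    then show "\<chi> x = 1"
      using fun_cong[OF \<open>c = char_one H\<close>, of x] by (simp add: c_def char_res_def char_one_def)
  qed
qed

lemma character_trivial_on_H_central:
  assumes \<chi>: "\<chi> \<in> characters G" and trivial: "\<forall>x\<in>H. \<chi> x = 1"
  shows "\<chi> \<in> dual_center G H \<omega>"
proof -
  have res: "char_res \<chi> = char_one H" unfolding char_res_def char_one_def using trivial by auto
  have "\<omega> (char_one H) \<gamma> = \<omega> \<gamma> (char_one H)" if "\<gamma> \<in> C" for \<gamma>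
    using omega_char_one_left omega_char_one_right that by simp
  then have "idem_comb (\<lambda>\<beta>. inverse (\<omega> (char_res \<chi>) \<beta>)) = idem_comb (\<lambda>\<alpha>. inverse (\<omega> \<alpha> (char_res \<chi>)))"
    and "idem_comb (\<omega> (char_res \<chi>)) = idem_comb (\<lambda>\<alpha>. \<omega> \<alpha> (char_res \<chi>))"
    unfolding res by (auto intro: idem_comb_cong)
  then have "slice_left G \<chi> (DeltaJ G H \<omega> h) = slice_right G \<chi> (DeltaJ G H \<omega> h)" if "h \<in> carrier G" for h
    unfolding slice_left_DeltaJ[OF \<chi> that] slice_right_DeltaJ[OF \<chi> that] by simp
  moreover have "\<chi> \<in> dual_space G" unfolding dual_space_def using character_outside[OF \<chi>] by blast
  ultimately show ?thesis using dual_center_iff_slices by blast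
qed

lemma central_grouplikes_eq:
  assumes "grp_center G = {\<one>}" and "nondegenerate G H \<omega>"
  shows "dual_grouplikes G \<inter> dual_center G H \<omega> = {\<chi> \<in> characters G. \<forall>x\<in>H. \<chi> x = 1}"
proof -
  have "dual_grouplikes G = characters G"
    unfolding dual_grouplikes_def characters_def dual_space_def by auto
  moreover have "\<chi> \<in> dual_center G H \<omega> \<longleftrightarrow> (\<forall>x\<in>H. \<chi> x = 1)" if "\<chi> \<in> characters G" for \<chi>
    using central_character_trivial_on_H[OF that _ assms] character_trivial_on_H_central[OF that] by blast
  ultimately show ?thesis by blast
qed

end

theorem corollary3p2:
  fixes G :: "('a, 'b) monoid_scheme" and H :: "'a set"
    and \<omega> :: "('a \<Rightarrow> 'k::field_char_0) \<Rightarrow> ('a \<Rightarrow> 'k) \<Rightarrow> 'k"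
  assumes "alg_closed TYPE('k)"
    and "group G" and "finite (carrier G)"
    and "grp_center G = {\<one>\<^bsub>G\<^esub>}"
    and "subgroup H G"
    and "\<forall>x\<in>H. \<forall>y\<in>H. x \<otimes>\<^bsub>G\<^esub> y = y \<otimes>\<^bsub>G\<^esub> x"
    and "is_2cocycle G H \<omega>"
    and "nondegenerate G H \<omega>"
  shows "card H dvd
           (card (carrier G) div card (dual_grouplikes G \<inter> dual_center G H \<omega>))"
proof -
  interpret abelian_twist G H \<omega>
    using assms by (simp add: abelian_twist_def abelian_twist_axioms_def finite_group_def finite_group_axioms_def)
  define T :: "('a \<Rightarrow> 'k) set" where "T = {\<chi> \<in> characters G. \<forall>x\<in>H. \<chi> x = 1}"
  have central: "dual_grouplikes G \<inter> dual_center G H \<omega> = T"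
    unfolding T_def using central_grouplikes_eq assms(4,8) .
  have T: "character_subgroup G T"
    unfolding T_def using character_subgroup_trivial_on[OF finite_carrier H_carrier] .
  then have "card T * card (annihilator G T) = card (carrier G)" "card T > 0"
    using card_character_subgroup_mult_card_annihilator[OF finite_carrier] finite_carrier
    by (auto simp: order_def character_subgroup_def card_gt_0_iff)
  then have "card (carrier G) div card T = card (annihilator G T)"
    by (metis nonzero_mult_div_cancel_left neq0_conv)
  moreover have "H \<subseteq> annihilator G T" unfolding T_def annihilator_def using H_carrier by auto
  moreover have "subgroup (annihilator G T) G"
    using subgroup_annihilator T unfolding character_subgroup_def by blast
  ultimately show ?thesis
    unfolding central using card_subgroup_dvd_card_subgroup[OF subgroup_H] by simp
qed

end
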